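(* The map sending a ranked $X$-tree $(\mathcal{N},r)$ to the set $\{\mathcal{P}(\mathcal{S}_i(\mathcal{N})) : 0\le i\le\sigma(r)\}$ induces a bijection between isomorphism classes of ranked $X$-trees and subsets of $\mathfrak{B}(X)$ that contain the partition $\{X\}$ and whose elements are pairwise comparable with respect to $\sqsubseteq$ (i.e. chains of the poset $(\mathfrak{B}(X),\sqsubseteq)$ containing $\{X\}$).
   Context: Let $X$ be a finite non-empty set. A rooted DAG $N=(V,A)$ is a finite directed acyclic graph with a vertex $\rho$ of indegree $0$ (the root) from which every vertex is reachable by a directed path. Leaf: outdegree $0$; tree vertex: indegree $\le1$; reticulation vertex: indegree $\ge2$; if $(u,v)\in A$ then $u$ is a parent of $v$. A reticulation cycle consists of two distinct directed paths with the same start and end vertex and no other common vertices. A rooted $X$-cactus $\mathcal{N}=(N,\varphi)$ is a rooted DAG with a map $\varphi:X\to V$ such that every vertex has indegree at most $2$, no two distinct reticulation cycles share an arc, and $\varphi(X)$ contains all leaves and all tree vertices of outdegree $1$. A rooted $X$-tree is a rooted $X$-cactus without reticulation vertices. A time-stamp function is $t:V\to\mathbb{R}_{\ge0}$ with $t(v)=0$ for $v\in\varphi(X)$, $t(u)>t(v)$ for arcs $(u,v)$ with $v$ not a reticulation vertex, and $t(v)=t(p_1)=t(p_2)$ for each reticulation vertex $v$ with parents $p_1,p_2$. Its size is $\sigma(t)=|t(V)|-1$. A ranking is a time-stamp function $r$ with $r(V)=\{0,\dots,\sigma(r)\}$; a ranked $X$-tree is a rooted $X$-tree with a ranking. Two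 ranked $X$-trees $((V',A'),\varphi'),r')$ and $((V'',A''),\varphi''),r'')$ are isomorphic if there is a digraph isomorphism $f:V'\to V''$ with $f(\varphi'(x))=\varphi''(x)$ for all $x\in X$ and $r'(v)=r''(f(v))$ for all $v\in V'$. A vertex $u$ is a descendant of $v$ if some directed path from the root to $u$ contains $v$; it is a strict descendant if every directed path from the root to $u$ contains $v$, and a non-strict descendant otherwise. $S(u)=\{x\in X:\varphi(x)$ is a strict descendant of $u\}$, $H(u)=\{x\in X:\varphi(x)$ is a non-strict descendant of $u\}$. For a ranked $(\mathcal{N},r)$ and $0\le i\le\sigma(r)$ let $V_i$ be the set of vertices $u$ with $r(u)\le i$ and $r(p)>i$ for all parents $p$ of $u$, and $\mathcal{S}_i(\mathcal{N})=\{(S(u),H(u)):u\in V_i\}\cup\{(H(u),\emptyset):u\in V_i,\ H(u)\neq\emptyset\}$. For a collection $\mathcal{S}$ of pairs $(S,H)$, $\mathcal{P}(\mathcal{S})=\{S:(S,H)\in\mathcal{S}\}$. $\mathfrak{B}(X)$ is the set of partitions of $X$ (sets of non-empty pairwise disjoint subsets with union $X$), and $\mathcal{P}_1\sqsubseteq\mathcal{P}_2$ means every block of $\mathcal{P}_1$ is contained in some block of $\mathcal{P}_2$. *)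

theory Defs
  imports Complex_Main "HOL-Library.Disjoint_Sets"
begin

definition indeg :: "('v \<times> 'v) set \<Rightarrow> 'v \<Rightarrow> nat" where
  "indeg A v = card {u. (u, v) \<in> A}"

definition outdeg :: "('v \<times> 'v) set \<Rightarrow> 'v \<Rightarrow> nat" where
  "outdeg A v = card {w. (v, w) \<in> A}"

definition is_leaf :: "'v set \<Rightarrow> ('v \<times> 'v) set \<Rightarrow> 'v \<Rightarrow> bool" where
  "is_leaf V A v \<longleftrightarrow> v \<in> V \<and> outdeg A v = 0"

definition is_tree_vertex :: "'v set \<Rightarrow> ('v \<times> 'v) set \<Rightarrow> 'v \<Rightarrow> bool" where
  "is_tree_vertex V A v \<longleftrightarrow> v \<in> V \<and> indeg A v \<le> 1"

definition is_reticulation :: "'v set \<Rightarrow> ('v \<times> 'v) set \<Rightarrow> 'v \<Rightarrow> bool" where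
  "is_reticulation V A v \<longleftrightarrow> v \<in> V \<and> indeg A v \<ge> 2"

definition dpath :: "('v \<times> 'v) set \<Rightarrow> 'v list \<Rightarrow> bool" where
  "dpath A p \<longleftrightarrow> p \<noteq> [] \<and> successively (\<lambda>a b. (a, b) \<in> A) p"

definition path_arcs :: "'v list \<Rightarrow> ('v \<times> 'v) set" where
  "path_arcs p = set (zip p (tl p))"

definition is_root :: "'v set \<Rightarrow> ('v \<times> 'v) set \<Rightarrow> 'v \<Rightarrow> bool" where
  "is_root V A \<rho> \<longleftrightarrow> \<rho> \<in> V \<and> indeg A \<rho> = 0 \<and>
     (\<forall>v\<in>V. \<exists>p. dpath A p \<and> hd p = \<rho> \<and> last p = v)"

definition rooted_DAG :: "'v set \<Rightarrow> ('v \<times> 'v) set \<Rightarrow> bool" where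
  "rooted_DAG V A \<longleftrightarrow> finite V \<and> A \<subseteq> V \<times> V \<and> acyclic A \<and> (\<exists>\<rho>. is_root V A \<rho>)"

definition root :: "'v set \<Rightarrow> ('v \<times> 'v) set \<Rightarrow> 'v" where
  "root V A = (THE \<rho>. is_root V A \<rho>)"

definition reticulation_cycle :: "('v \<times> 'v) set \<Rightarrow> 'v list set \<Rightarrow> bool" where
  "reticulation_cycle A C \<longleftrightarrow> (\<exists>p1 p2. C = {p1, p2} \<and> p1 \<noteq> p2 \<and> dpath A p1 \<and> dpath A p2 \<and>
      hd p1 = hd p2 \<and> last p1 = last p2 \<and> set p1 \<inter> set p2 = {hd p1, last p1})"

definition cycle_arcs :: "'v list set \<Rightarrow> ('v \<times> 'v) set" where
  "cycle_arcs C = (\<Union>p\<in>C. path_arcs p)"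

definition rooted_cactus :: "'x set \<Rightarrow> 'v set \<Rightarrow> ('v \<times> 'v) set \<Rightarrow> ('x \<Rightarrow> 'v) \<Rightarrow> bool" where
  "rooted_cactus X V A \<phi> \<longleftrightarrow> rooted_DAG V A \<and> (\<forall>v\<in>V. indeg A v \<le> 2) \<and>
     (\<forall>C1 C2. reticulation_cycle A C1 \<and> reticulation_cycle A C2 \<and> C1 \<noteq> C2 \<longrightarrow>
         cycle_arcs C1 \<inter> cycle_arcs C2 = {}) \<and>
     \<phi> ` X \<subseteq> V \<and>
     (\<forall>v\<in>V. is_leaf V A v \<longrightarrow> v \<in> \<phi> ` X) \<and>
     (\<forall>v\<in>V. is_tree_vertex V A v \<and> outdeg A v = 1 \<longrightarrow> v \<in> \<phi> ` X)"

definition rooted_tree :: "'x set \<Rightarrow> 'v set \<Rightarrow> ('v \<times> 'v) set \<Rightarrow> ('x \<Rightarrow> 'v) \<Rightarrow> bool" where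
  "rooted_tree X V A \<phi> \<longleftrightarrow> rooted_cactus X V A \<phi> \<and> (\<forall>v\<in>V. \<not> is_reticulation V A v)"

definition time_stamp ::
  "'x set \<Rightarrow> 'v set \<Rightarrow> ('v \<times> 'v) set \<Rightarrow> ('x \<Rightarrow> 'v) \<Rightarrow> ('v \<Rightarrow> real) \<Rightarrow> bool" where
  "time_stamp X V A \<phi> t \<longleftrightarrow> (\<forall>v\<in>V. t v \<ge> 0) \<and> (\<forall>x\<in>X. t (\<phi> x) = 0) \<and>
     (\<forall>(u, v)\<in>A. \<not> is_reticulation V A v \<longrightarrow> t u > t v) \<and>
     (\<forall>(p, v)\<in>A. is_reticulation V A v \<longrightarrow> t v = t p)"

definition ts_size :: "'v set \<Rightarrow> ('v \<Rightarrow> real) \<Rightarrow> nat" where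
  "ts_size V t = card (t ` V) - 1"

definition ranking ::
  "'x set \<Rightarrow> 'v set \<Rightarrow> ('v \<times> 'v) set \<Rightarrow> ('x \<Rightarrow> 'v) \<Rightarrow> ('v \<Rightarrow> real) \<Rightarrow> bool" where
  "ranking X V A \<phi> r \<longleftrightarrow> time_stamp X V A \<phi> r \<and> r ` V = real ` {0..ts_size V r}"

definition ranked_tree ::
  "'x set \<Rightarrow> 'v set \<Rightarrow> ('v \<times> 'v) set \<Rightarrow> ('x \<Rightarrow> 'v) \<Rightarrow> ('v \<Rightarrow> real) \<Rightarrow> bool" where
  "ranked_tree X V A \<phi> r \<longleftrightarrow> rooted_tree X V A \<phi> \<and> ranking X V A \<phi> r"

definition ranked_trees :: "'x set \<Rightarrow> ('v set \<times> ('v \<times> 'v) set \<times> ('x \<Rightarrow> 'v) \<times> ('v \<Rightarrow> real)) set" where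
  "ranked_trees X = {(V, A, \<phi>, r). ranked_tree X V A \<phi> r}"

definition ranked_iso ::
  "'x set \<Rightarrow> ('v set \<times> ('v \<times> 'v) set \<times> ('x \<Rightarrow> 'v) \<times> ('v \<Rightarrow> real))
          \<Rightarrow> ('v set \<times> ('v \<times> 'v) set \<times> ('x \<Rightarrow> 'v) \<times> ('v \<Rightarrow> real)) \<Rightarrow> bool" where
  "ranked_iso X T1 T2 = (case T1 of (V1, A1, \<phi>1, r1) \<Rightarrow> case T2 of (V2, A2, \<phi>2, r2) \<Rightarrow>
     (\<exists>f. bij_betw f V1 V2 \<and> (\<forall>u\<in>V1. \<forall>v\<in>V1. (u, v) \<in> A1 \<longleftrightarrow> (f u, f v) \<in> A2) \<and>
          (\<forall>x\<in>X. f (\<phi>1 x) = \<phi>2 x) \<and> (\<forall>v\<in>V1. r1 v = r2 (f v))))"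

definition root_paths :: "'v set \<Rightarrow> ('v \<times> 'v) set \<Rightarrow> 'v \<Rightarrow> 'v list set" where
  "root_paths V A u = {p. dpath A p \<and> hd p = root V A \<and> last p = u}"

definition descendant :: "'v set \<Rightarrow> ('v \<times> 'v) set \<Rightarrow> 'v \<Rightarrow> 'v \<Rightarrow> bool" where
  "descendant V A u v \<longleftrightarrow> (\<exists>p\<in>root_paths V A u. v \<in> set p)"

definition strict_descendant :: "'v set \<Rightarrow> ('v \<times> 'v) set \<Rightarrow> 'v \<Rightarrow> 'v \<Rightarrow> bool" where
  "strict_descendant V A u v \<longleftrightarrow> (\<forall>p\<in>root_paths V A u. v \<in> set p)"

definition nonstrict_descendant :: "'v set \<Rightarrow> ('v \<times> 'v) set \<Rightarrow> 'v \<Rightarrow> 'v \<Rightarrow> bool" where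
  "nonstrict_descendant V A u v \<longleftrightarrow> descendant V A u v \<and> \<not> strict_descendant V A u v"

definition Sset :: "'x set \<Rightarrow> 'v set \<Rightarrow> ('v \<times> 'v) set \<Rightarrow> ('x \<Rightarrow> 'v) \<Rightarrow> 'v \<Rightarrow> 'x set" where
  "Sset X V A \<phi> u = {x\<in>X. strict_descendant V A (\<phi> x) u}"

definition Hset :: "'x set \<Rightarrow> 'v set \<Rightarrow> ('v \<times> 'v) set \<Rightarrow> ('x \<Rightarrow> 'v) \<Rightarrow> 'v \<Rightarrow> 'x set" where
  "Hset X V A \<phi> u = {x\<in>X. nonstrict_descendant V A (\<phi> x) u}"

definition level_vertices :: "'v set \<Rightarrow> ('v \<times> 'v) set \<Rightarrow> ('v \<Rightarrow> real) \<Rightarrow> nat \<Rightarrow> 'v set" where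
  "level_vertices V A r i = {u\<in>V. r u \<le> real i \<and> (\<forall>p. (p, u) \<in> A \<longrightarrow> r p > real i)}"

definition Scoll ::
  "'x set \<Rightarrow> 'v set \<Rightarrow> ('v \<times> 'v) set \<Rightarrow> ('x \<Rightarrow> 'v) \<Rightarrow> ('v \<Rightarrow> real) \<Rightarrow> nat \<Rightarrow> ('x set \<times> 'x set) set" where
  "Scoll X V A \<phi> r i =
     {(Sset X V A \<phi> u, Hset X V A \<phi> u) | u. u \<in> level_vertices V A r i} \<union>
     {(Hset X V A \<phi> u, {}) | u. u \<in> level_vertices V A r i \<and> Hset X V A \<phi> u \<noteq> {}}"

definition Pcoll :: "('x set \<times> 'x set) set \<Rightarrow> 'x set set" where
  "Pcoll S = fst ` S"

definition partition_chain_of ::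
  "'x set \<Rightarrow> ('v set \<times> ('v \<times> 'v) set \<times> ('x \<Rightarrow> 'v) \<times> ('v \<Rightarrow> real)) \<Rightarrow> 'x set set set" where
  "partition_chain_of X T = (case T of (V, A, \<phi>, r) \<Rightarrow>
     {Pcoll (Scoll X V A \<phi> r i) | i. i \<le> ts_size V r})"

definition refines :: "'x set set \<Rightarrow> 'x set set \<Rightarrow> bool" where
  "refines P1 P2 \<longleftrightarrow> (\<forall>B\<in>P1. \<exists>B'\<in>P2. B \<subseteq> B')"

definition partitions :: "'x set \<Rightarrow> 'x set set set" where
  "partitions X = {P. partition_on X P}"

definition chains_with_top :: "'x set \<Rightarrow> 'x set set set set" where
  "chains_with_top X = {C. C \<subseteq> partitions X \<and> {X} \<in> C \<and>
      (\<forall>P\<in>C. \<forall>Q\<in>C. refines P Q \<or> refines Q P)}"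

end

theory Submission
  imports Defs
begin

text \<open>
  In a ranked tree every vertex has a unique root path, so \<open>S(u)\<close> is the cluster of leaves
  below \<open>u\<close> and \<open>H(u)\<close> is empty. The clusters of the level-\<open>i\<close> vertices (rank at most \<open>i\<close>,
  parents above \<open>i\<close>) partition \<open>X\<close>, coarsen as \<open>i\<close> grows and end with \<open>{X}\<close>. A vertex is
  determined by its cluster, arcs are the covering pairs of clusters, and the rank of a vertex is
  the position in the chain of the finest partition containing its cluster; hence the chain
  determines the ranked tree up to isomorphism. Conversely, the blocks of a chain of partitions
  form a hierarchy. Its Hasse diagram, with each \<open>x\<close> attached to the least block containing it
  and each block ranked by the finest member of the chain containing it, is a ranked tree whose
  chain is the given one.
\<close>

lemma successively_rtrancl:
  "successively (\<lambda>a b. (a, b) \<in> A) (x # xs) \<Longrightarrow> y \<in> set (x # xs) \<Longrightarrow>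
   (x, y) \<in> A\<^sup>* \<and> (y, last (x # xs)) \<in> A\<^sup>*"
proof (induction xs arbitrary: x y)
  case (Cons z zs)
  then have xz: "(x, z) \<in> A" and path: "successively (\<lambda>a b. (a, b) \<in> A) (z # zs)"
    by simp_all
  have "(z, last (z # zs)) \<in> A\<^sup>*" using Cons.IH[OF path, of z] by simp
  with xz Cons.IH[OF path, of y] Cons.prems(2) show ?case
    by (cases "y = x") (auto intro: converse_rtrancl_into_rtrancl)
qed simp

lemma dpath_rtrancl:
  "dpath A p \<Longrightarrow> y \<in> set p \<Longrightarrow> (hd p, y) \<in> A\<^sup>* \<and> (y, last p) \<in> A\<^sup>*"
  by (cases p) (auto simp: dpath_def dest: successively_rtrancl)

lemma dpath_trancl: "dpath A p \<Longrightarrow> length p \<ge> 2 \<Longrightarrow> (hd p, last p) \<in> A\<^sup>+"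
proof -
  assume path: "dpath A p" and len: "length p \<ge> 2"
  then obtain a b rest where p: "p = a # b # rest"
    by (metis Suc_le_length_iff numeral_2_eq_2)
  then have "(a, b) \<in> A" and "dpath A (b # rest)"
    using path by (auto simp: dpath_def)
  then show ?thesis
    using dpath_rtrancl[of A "b # rest" b] p by simp
qed

lemma rtrancl_imp_dpath: "(a, b) \<in> A\<^sup>* \<Longrightarrow> \<exists>p. dpath A p \<and> hd p = a \<and> last p = b"
proof (induction rule: rtrancl_induct)
  case base
  show ?case by (rule exI[of _ "[a]"]) (simp add: dpath_def)
next
  case (step y z)
  then obtain p where p: "dpath A p" "hd p = a" "last p = y" by blast
  then have "dpath A (p @ [z])"
    using step(2) by (auto simp: dpath_def successively_append_iff)
  with p show ?case by (intro exI[of _ "p @ [z]"]) (auto simp: dpath_def)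
qed

lemma dpath_append_tl:
  assumes "dpath A p" "dpath A q" "last p = hd q"
  shows "dpath A (p @ tl q) \<and> hd (p @ tl q) = hd p \<and> last (p @ tl q) = last q"
proof (cases "tl q = []")
  case True
  then show ?thesis using assms by (cases q) (auto simp: dpath_def)
next
  case False
  then obtain b c cs where q: "q = b # c # cs"
    using assms(2) unfolding dpath_def by (metis list.collapse)
  then have "(hd q, c) \<in> A" using assms(2) by (auto simp: dpath_def)
  then show ?thesis
    using assms q unfolding dpath_def by (auto simp: successively_append_iff)
qed

definition unique_parents :: "('v \<times> 'v) set \<Rightarrow> bool" where
  "unique_parents A \<longleftrightarrow> (\<forall>u u' v. (u, v) \<in> A \<longrightarrow> (u', v) \<in> A \<longrightarrow> u = u')"

lemma finite_parents: "finite A \<Longrightarrow> finite {u. (u, v) \<in> A}"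
  by (rule finite_subset[of _ "fst ` A"]) force+

lemma finite_children: "finite A \<Longrightarrow> finite {w. (v, w) \<in> A}"
  by (rule finite_subset[of _ "snd ` A"]) force+

lemma indeg_le_1_iff:
  "finite A \<Longrightarrow> indeg A v \<le> 1 \<longleftrightarrow> (\<forall>u u'. (u, v) \<in> A \<longrightarrow> (u', v) \<in> A \<longrightarrow> u = u')"
  unfolding indeg_def One_nat_def by (simp only: card_le_Suc0_iff_eq[OF finite_parents]) blast

lemma unique_parents_iff_indeg: "finite A \<Longrightarrow> unique_parents A \<longleftrightarrow> (\<forall>v. indeg A v \<le> 1)"
  unfolding unique_parents_def using indeg_le_1_iff[of A] by blast

lemma indeg_eq_0_iff: "finite A \<Longrightarrow> indeg A v = 0 \<longleftrightarrow> (\<forall>u. (u, v) \<notin> A)"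
  unfolding indeg_def by (subst card_0_eq[OF finite_parents]) auto

lemma outdeg_eq_0_iff: "finite A \<Longrightarrow> outdeg A v = 0 \<longleftrightarrow> (\<forall>w. (v, w) \<notin> A)"
  unfolding outdeg_def by (subst card_0_eq[OF finite_children]) auto

lemma outdeg_eq_1_iff: "outdeg A v = 1 \<longleftrightarrow> (\<exists>c. {w. (v, w) \<in> A} = {c})"
  unfolding outdeg_def by (simp add: card_1_singleton_iff)

lemma unique_parents_ancestors_comparable:
  assumes "unique_parents A"
  shows "(a, y) \<in> A\<^sup>* \<Longrightarrow> (b, y) \<in> A\<^sup>* \<Longrightarrow> (a, b) \<in> A\<^sup>* \<or> (b, a) \<in> A\<^sup>*"
proof (induction arbitrary: b rule: rtrancl_induct)
  case (step y z)
  from \<open>(b, z) \<in> A\<^sup>*\<close> show ?case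
  proof (cases rule: rtranclE)
    case base
    then show ?thesis using step(1,2) by auto
  next
    case (step y')
    with \<open>(y, z) \<in> A\<close> assms have "y' = y" unfolding unique_parents_def by blast
    with step have "(b, y) \<in> A\<^sup>*" by simp
    then show ?thesis by (rule step.IH)
  qed
qed simp

lemma dpath_unique:
  assumes up: "unique_parents A" and ac: "acyclic A"
  shows "dpath A p \<Longrightarrow> dpath A q \<Longrightarrow> hd p = hd q \<Longrightarrow> last p = last q \<Longrightarrow> p = q"
proof (induction p arbitrary: q rule: rev_induct)
  case Nil
  then show ?case by (simp add: dpath_def)
next
  case (snoc x xs)
  have single: "s = [hd s]" if "dpath A s" "hd s = last s" for s
  proof (rule ccontr)
    assume "s \<noteq> [hd s]"
    with that(1) have "length s \<ge> 2"
      unfolding dpath_def by (cases s) (auto simp: Suc_le_eq)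
    with that have "(hd s, hd s) \<in> A\<^sup>+" using dpath_trancl by metis
    with ac show False by (simp add: acyclic_def)
  qed
  show ?case
  proof (cases "xs = []")
    case True
    with snoc.prems single[of q] show ?thesis by auto
  next
    case xs: False
    obtain ys y where qy: "q = ys @ [y]"
      using snoc.prems(2) unfolding dpath_def by (metis rev_exhaust)
    show ?thesis
    proof (cases "ys = []")
      case True
      with snoc.prems qy single[of "xs @ [x]"] xs show ?thesis by auto
    next
      case ys: False
      have "(last xs, x) \<in> A" "(last ys, x) \<in> A"
        using snoc.prems qy xs ys by (auto simp: dpath_def successively_append_iff)
      with up have "last xs = last ys" unfolding unique_parents_def by blast
      moreover have "dpath A xs" "dpath A ys" "hd xs = hd ys"
        using snoc.prems xs ys qy by (auto simp: dpath_def successively_append_iff)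
      ultimately have "xs = ys" using snoc.IH by blast
      then show ?thesis using qy snoc.prems(4) by simp
    qed
  qed
qed

lemma no_reticulation_cycle:
  assumes "unique_parents A" and "acyclic A"
  shows "\<not> reticulation_cycle A Cy"
proof
  assume "reticulation_cycle A Cy"
  then obtain p q where "p \<noteq> q" "dpath A p" "dpath A q" "hd p = hd q" "last p = last q"
    unfolding reticulation_cycle_def by blast
  then show False using dpath_unique[OF assms] by blast
qed

section \<open>Chains of partitions\<close>

lemma partition_refines_refl: "refines P P"
  unfolding refines_def by blast

lemma partition_refines_trans: "refines P Q \<Longrightarrow> refines Q R \<Longrightarrow> refines P R"
  unfolding refines_def by (meson order_trans)

lemma partition_block_eq:
  "partition_on X P \<Longrightarrow> B \<in> P \<Longrightarrow> D \<in> P \<Longrightarrow> x \<in> B \<Longrightarrow> x \<in> D \<Longrightarrow> B = D"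
  using disjointD[OF partition_onD2] by blast

lemma partition_block_subset_eq:
  "partition_on X P \<Longrightarrow> B \<in> P \<Longrightarrow> D \<in> P \<Longrightarrow> B \<subseteq> D \<Longrightarrow> B = D"
proof -
  assume P: "partition_on X P" and B: "B \<in> P" and "D \<in> P" "B \<subseteq> D"
  obtain x where "x \<in> B" using partition_onD3[OF P] B by (metis ex_in_conv)
  with partition_block_eq[OF P B \<open>D \<in> P\<close>] \<open>B \<subseteq> D\<close> show "B = D" by blast
qed

lemma partition_refines_antisym:
  "partition_on X P \<Longrightarrow> partition_on X Q \<Longrightarrow> refines P Q \<Longrightarrow> refines Q P \<Longrightarrow> P = Q"
  using refines_asym[of X P Q] unfolding Disjoint_Sets.refines_def refines_def by blast

lemma partition_subset_eq:
  assumes P: "partition_on X P" and Q: "partition_on X Q" and PQ: "P \<subseteq> Q"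
  shows "P = Q"
proof -
  have "D \<in> P" if D: "D \<in> Q" for D
  proof -
    obtain x where x: "x \<in> D" using partition_onD3[OF Q] D by (metis ex_in_conv)
    then have "x \<in> X" using partition_onD1[OF Q] D by blast
    then obtain B where "B \<in> P" "x \<in> B" using partition_onD1[OF P] by blast
    with D x PQ partition_block_eq[OF Q] show "D \<in> P" by blast
  qed
  with PQ show ?thesis by blast
qed

definition chain_height :: "'x set set set \<Rightarrow> 'x set set \<Rightarrow> nat" where
  "chain_height C P = card {Q\<in>C. refines Q P \<and> Q \<noteq> P}"

definition block_rank :: "'x set set set \<Rightarrow> 'x set \<Rightarrow> nat" where
  "block_rank C B = Min {chain_height C P | P. P \<in> C \<and> B \<in> P}"

locale partition_chain =
  fixes X :: "'x set" and C :: "'x set set set"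
  assumes chain: "C \<in> chains_with_top X" and finite_X: "finite X"
begin

lemma chain_partition: "P \<in> C \<Longrightarrow> partition_on X P"
  and top_in_chain: "{X} \<in> C"
  and chain_comparable: "P \<in> C \<Longrightarrow> Q \<in> C \<Longrightarrow> refines P Q \<or> refines Q P"
  using chain unfolding chains_with_top_def partitions_def by auto

lemma finite_chain: "finite C"
  by (rule finite_subset[OF _ finitely_many_partition_on[OF finite_X]])
    (use chain_partition in blast)

lemma chain_height_less_card: "P \<in> C \<Longrightarrow> chain_height C P < card C"
  unfolding chain_height_def by (rule psubset_card_mono[OF finite_chain]) blast

lemma chain_height_strict_mono:
  assumes P: "P \<in> C" and Q: "Q \<in> C" and PQ: "refines P Q" and "P \<noteq> Q"
  shows "chain_height C P < chain_height C Q"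
proof -
  have "{R\<in>C. refines R P \<and> R \<noteq> P} \<subset> {R\<in>C. refines R Q \<and> R \<noteq> Q}"
  proof
    show "{R\<in>C. refines R P \<and> R \<noteq> P} \<subseteq> {R\<in>C. refines R Q \<and> R \<noteq> Q}"
      using partition_refines_trans[OF _ PQ] partition_refines_antisym chain_partition P Q PQ
      by blast
    show "{R\<in>C. refines R P \<and> R \<noteq> P} \<noteq> {R\<in>C. refines R Q \<and> R \<noteq> Q}"
      using P PQ \<open>P \<noteq> Q\<close> by blast
  qed
  then show ?thesis
    unfolding chain_height_def by (rule psubset_card_mono[rotated]) (simp add: finite_chain)
qed

lemma refines_if_chain_height_le:
  assumes "P \<in> C" "Q \<in> C" "chain_height C P \<le> chain_height C Q"
  shows "refines P Q"
  using chain_comparable[OF assms(1,2)] chain_height_strict_mono[OF assms(2,1)] assms(3)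
    partition_refines_refl by fastforce

lemma inj_on_chain_height: "inj_on (chain_height C) C"
  by (rule inj_onI)
    (metis refines_if_chain_height_le order_refl partition_refines_antisym chain_partition)

lemma bij_betw_chain_height: "bij_betw (chain_height C) C {..<card C}"
proof -
  have "chain_height C ` C = {..<card C}"
    using chain_height_less_card card_image[OF inj_on_chain_height]
    by (intro card_subset_eq) auto
  then show ?thesis using inj_on_chain_height unfolding bij_betw_def by simp
qed

definition nth_partition :: "nat \<Rightarrow> 'x set set" where
  "nth_partition k = inv_into C (chain_height C) k"

lemma nth_partition_in_chain: "k < card C \<Longrightarrow> nth_partition k \<in> C"
  and chain_height_nth_partition: "k < card C \<Longrightarrow> chain_height C (nth_partition k) = k"
  using bij_betw_chain_height unfolding nth_partition_def bij_betw_def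
  by (auto intro: inv_into_into f_inv_into_f)

lemma partition_on_nth_partition: "k < card C \<Longrightarrow> partition_on X (nth_partition k)"
  using chain_partition nth_partition_in_chain by blast

lemma nth_partition_chain_height: "P \<in> C \<Longrightarrow> nth_partition (chain_height C P) = P"
  unfolding nth_partition_def using inj_on_chain_height by (rule inv_into_f_f)

lemma nth_partition_refines: "j \<le> k \<Longrightarrow> k < card C \<Longrightarrow> refines (nth_partition j) (nth_partition k)"
  using refines_if_chain_height_le nth_partition_in_chain chain_height_nth_partition by simp

definition blocks :: "'x set set" where
  "blocks = \<Union> C"

lemma block_nonempty: "B \<in> blocks \<Longrightarrow> B \<noteq> {}"
  and block_subset: "B \<in> blocks \<Longrightarrow> B \<subseteq> X"
  unfolding blocks_def using chain_partition partition_onD1 partition_onD3 by fastforce+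

lemma top_block: "X \<in> blocks"
  unfolding blocks_def using top_in_chain by blast

lemma nth_partition_block: "k < card C \<Longrightarrow> B \<in> nth_partition k \<Longrightarrow> B \<in> blocks"
  unfolding blocks_def using nth_partition_in_chain by blast

lemma finite_blocks: "finite blocks"
  using finite_subset[of blocks "Pow X"] block_subset finite_X by blast

lemma blocks_laminar: "B \<in> blocks \<Longrightarrow> D \<in> blocks \<Longrightarrow> x \<in> B \<Longrightarrow> x \<in> D \<Longrightarrow> B \<subseteq> D \<or> D \<subseteq> B"
proof -
  assume B: "B \<in> blocks" and D: "D \<in> blocks" and x: "x \<in> B" "x \<in> D"
  from B D obtain P Q where P: "P \<in> C" "B \<in> P" and Q: "Q \<in> C" "D \<in> Q"
    unfolding blocks_def by blast
  have "B \<subseteq> D"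
    if PQ: "refines P Q" and B: "B \<in> P" and D: "Q \<in> C" "D \<in> Q" and x: "x \<in> B" "x \<in> D"
    for P Q B D
  proof -
    obtain D' where "D' \<in> Q" "B \<subseteq> D'" using PQ B unfolding refines_def by blast
    with D x partition_block_eq[OF chain_partition] show ?thesis by blast
  qed
  with chain_comparable[OF P(1) Q(1)] P Q x show ?thesis by blast
qed

lemma block_rank_le: "P \<in> C \<Longrightarrow> B \<in> P \<Longrightarrow> block_rank C B \<le> chain_height C P"
  unfolding block_rank_def by (rule Min_le) (use finite_chain in auto)

lemma block_in_nth_partition_rank: "B \<in> blocks \<Longrightarrow> B \<in> nth_partition (block_rank C B)"
  and block_rank_less_card: "B \<in> blocks \<Longrightarrow> block_rank C B < card C"
proof -
  assume "B \<in> blocks"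
  then have "{chain_height C P | P. P \<in> C \<and> B \<in> P} \<noteq> {}"
    unfolding blocks_def by blast
  then have "block_rank C B \<in> {chain_height C P | P. P \<in> C \<and> B \<in> P}"
    unfolding block_rank_def by (rule Min_in[rotated]) (use finite_chain in auto)
  then obtain P where P: "P \<in> C" "B \<in> P" "block_rank C B = chain_height C P" by blast
  then show "B \<in> nth_partition (block_rank C B)" using nth_partition_chain_height by simp
  show "block_rank C B < card C" using P chain_height_less_card by simp
qed

lemma block_rank_le_iff:
  assumes B: "B \<in> blocks" and k: "k < card C"
  shows "block_rank C B \<le> k \<longleftrightarrow> (\<exists>D\<in>nth_partition k. B \<subseteq> D)"
proof
  assume "block_rank C B \<le> k"
  then have "refines (nth_partition (block_rank C B)) (nth_partition k)"
    using nth_partition_refines k by blast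
  with block_in_nth_partition_rank[OF B] show "\<exists>D\<in>nth_partition k. B \<subseteq> D"
    unfolding refines_def by blast
next
  assume "\<exists>D\<in>nth_partition k. B \<subseteq> D"
  then obtain D where D: "D \<in> nth_partition k" "B \<subseteq> D" by blast
  obtain P where P: "P \<in> C" "B \<in> P" using B unfolding blocks_def by blast
  show "block_rank C B \<le> k"
  proof (cases "chain_height C P \<le> k")
    case True
    with block_rank_le[OF P] show ?thesis by simp
  next
    case False
    then have "refines (nth_partition k) P"
      using refines_if_chain_height_le nth_partition_in_chain chain_height_nth_partition k P(1)
      by simp
    then obtain D' where "D' \<in> P" "D \<subseteq> D'" using D(1) unfolding refines_def by blast
    with D P have "B = D"
      using partition_block_subset_eq[OF chain_partition[OF P(1)]] by blast
    with D(1) have "block_rank C B \<le> chain_height C (nth_partition k)"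
      using block_rank_le nth_partition_in_chain k by blast
    with k show ?thesis by (simp add: chain_height_nth_partition)
  qed
qed

lemma block_rank_mono: "B \<in> blocks \<Longrightarrow> E \<in> blocks \<Longrightarrow> B \<subseteq> E \<Longrightarrow> block_rank C B \<le> block_rank C E"
  using block_rank_le_iff block_in_nth_partition_rank block_rank_less_card by blast

lemma block_rank_strict_mono:
  assumes B: "B \<in> blocks" and E: "E \<in> blocks" and BE: "B \<subset> E"
  shows "block_rank C B < block_rank C E"
proof (rule ccontr)
  assume "\<not> ?thesis"
  with block_rank_mono[OF B E] BE have "block_rank C B = block_rank C E" by simp
  then have "B \<in> nth_partition (block_rank C E)" "E \<in> nth_partition (block_rank C E)"
    using block_in_nth_partition_rank B E by metis+
  then have "B = E"
    using BE partition_block_subset_eq partition_on_nth_partition block_rank_less_card[OF E]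
    by blast
  with BE show False by simp
qed

lemma block_rank_image:
  assumes "X \<noteq> {}"
  shows "block_rank C ` blocks = {..<card C}"
proof
  show "block_rank C ` blocks \<subseteq> {..<card C}" using block_rank_less_card by blast
  have "\<exists>B\<in>nth_partition k. block_rank C B = k" if k: "k < card C" for k
  proof (cases k)
    case 0
    obtain x where "x \<in> X" using assms by blast
    then obtain B where "B \<in> nth_partition k"
      using partition_onD1[OF partition_on_nth_partition[OF k]] by blast
    with 0 k show ?thesis
      using block_rank_le[OF nth_partition_in_chain[OF k]] chain_height_nth_partition by fastforce
  next
    case (Suc j)
    have "nth_partition j \<noteq> nth_partition k"
      using chain_height_nth_partition k Suc by (metis Suc_lessD n_not_Suc_n)
    then have "\<not> nth_partition k \<subseteq> nth_partition j"
      using partition_subset_eq chain_partition nth_partition_in_chain k Suc by (metis Suc_lessD)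
    then obtain B where B: "B \<in> nth_partition k" "B \<notin> nth_partition j" by blast
    then have Bb: "B \<in> blocks" using nth_partition_block[OF k] by blast
    have "block_rank C B \<le> k" using block_rank_le_iff[OF Bb k] B(1) by blast
    moreover have "\<not> block_rank C B \<le> j"
    proof
      assume "block_rank C B \<le> j"
      then obtain D where D: "D \<in> nth_partition j" "B \<subseteq> D"
        using block_rank_le_iff[OF Bb] k Suc by auto
      then obtain D' where "D' \<in> nth_partition k" "D \<subseteq> D'"
        using nth_partition_refines[of j k] k Suc unfolding refines_def by auto
      with B D have "B = D"
        using partition_block_subset_eq[OF partition_on_nth_partition[OF k]] by blast
      with B D show False by simp
    qed
    ultimately have "block_rank C B = k" using Suc by simp
    with B(1) show ?thesis by blast
  qed
  then show "{..<card C} \<subseteq> block_rank C ` blocks"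
    unfolding blocks_def using nth_partition_in_chain by fastforce
qed

lemma ex_least_block: "x \<in> X \<Longrightarrow> \<exists>m. m \<in> blocks \<and> x \<in> m \<and> (\<forall>B\<in>blocks. x \<in> B \<longrightarrow> m \<subseteq> B)"
proof -
  assume x: "x \<in> X"
  define S where "S = {B\<in>blocks. x \<in> B}"
  have "finite S" "X \<in> S" unfolding S_def using finite_blocks top_block x by auto
  then obtain m where m: "m \<in> S" "\<forall>B\<in>S. B \<subseteq> m \<longrightarrow> B = m"
    using finite_has_minimal[of S] by blast
  then have "m \<subseteq> B" if "B \<in> blocks" "x \<in> B" for B
    using that blocks_laminar[of m B x] unfolding S_def by blast
  with m(1) show ?thesis unfolding S_def by blast
qed

definition least_block :: "'x \<Rightarrow> 'x set" where
  "least_block x = (SOME m. m \<in> blocks \<and> x \<in> m \<and> (\<forall>B\<in>blocks. x \<in> B \<longrightarrow> m \<subseteq> B))"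

lemma least_block_in_blocks: "x \<in> X \<Longrightarrow> least_block x \<in> blocks"
  and mem_least_block: "x \<in> X \<Longrightarrow> x \<in> least_block x"
  and least_block_subset: "x \<in> X \<Longrightarrow> B \<in> blocks \<Longrightarrow> x \<in> B \<Longrightarrow> least_block x \<subseteq> B"
  using someI_ex[OF ex_least_block] unfolding least_block_def[symmetric] by blast+

definition covers :: "'x set \<Rightarrow> 'x set \<Rightarrow> bool" where
  "covers B D \<longleftrightarrow> B \<in> blocks \<and> D \<in> blocks \<and> D \<subset> B \<and> \<not> (\<exists>E\<in>blocks. D \<subset> E \<and> E \<subset> B)"

lemma ex_cover_above:
  assumes "D \<in> blocks" "B \<in> blocks" "D \<subset> B"
  shows "\<exists>E. D \<subseteq> E \<and> covers B E"
proof -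
  define S where "S = {E\<in>blocks. D \<subseteq> E \<and> E \<subset> B}"
  have "finite S" "D \<in> S" unfolding S_def using finite_blocks assms by auto
  then obtain m where m: "m \<in> S" "\<forall>E\<in>S. m \<subseteq> E \<longrightarrow> E = m"
    using finite_has_maximal[of S] by blast
  moreover have "\<not> (m \<subset> E \<and> E \<subset> B)" if "E \<in> blocks" for E
    using m that unfolding S_def by blast
  ultimately have "covers B m" using assms(2) unfolding covers_def S_def by blast
  with m(1) show ?thesis unfolding S_def by blast
qed

lemma ex_cover_below:
  assumes "D \<in> blocks" "B \<in> blocks" "D \<subset> B"
  shows "\<exists>E. E \<subseteq> B \<and> covers E D"
proof -
  define S where "S = {E\<in>blocks. D \<subset> E \<and> E \<subseteq> B}"
  have "finite S" "B \<in> S" unfolding S_def using finite_blocks assms by auto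
  then obtain m where m: "m \<in> S" "\<forall>E\<in>S. E \<subseteq> m \<longrightarrow> E = m"
    using finite_has_minimal[of S] by blast
  moreover have "\<not> (D \<subset> E \<and> E \<subset> m)" if "E \<in> blocks" for E
    using m that unfolding S_def by blast
  ultimately have "covers m D" using assms(1) unfolding covers_def S_def by blast
  with m(1) show ?thesis unfolding S_def by blast
qed

lemma covers_rtrancl: "D \<in> blocks \<Longrightarrow> B \<in> blocks \<Longrightarrow> D \<subseteq> B \<Longrightarrow> (B, D) \<in> {(B, D). covers B D}\<^sup>*"
proof (induction "card (B - D)" arbitrary: D rule: less_induct)
  case less
  show ?case
  proof (cases "D = B")
    case False
    with less.prems obtain E where E: "E \<subseteq> B" "covers E D"
      using ex_cover_below by blast
    then have "B - E \<subset> B - D" unfolding covers_def by blast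
    moreover have "finite (B - D)"
      using finite_subset[OF block_subset[OF less.prems(2)] finite_X] by simp
    ultimately have "card (B - E) < card (B - D)" by (simp add: psubset_card_mono)
    with E less.prems have "(B, E) \<in> {(B, D). covers B D}\<^sup>*"
      using less.hyps unfolding covers_def by blast
    with E(2) show ?thesis by (simp add: rtrancl_into_rtrancl)
  qed simp
qed

end

section \<open>Clusters and levels of a ranked tree\<close>

locale ranked_X_tree =
  fixes X :: "'x set" and V :: "'v set" and A :: "('v \<times> 'v) set"
    and \<phi> :: "'x \<Rightarrow> 'v" and r :: "'v \<Rightarrow> real"
  assumes ranked_tree: "ranked_tree X V A \<phi> r"
begin

lemma rooted_cactus: "rooted_cactus X V A \<phi>"
  and no_reticulation: "v \<in> V \<Longrightarrow> \<not> is_reticulation V A v"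
  and ranking: "ranking X V A \<phi> r"
  using ranked_tree unfolding ranked_tree_def rooted_tree_def by simp_all

lemma finite_V: "finite V" and arcs_in_V: "A \<subseteq> V \<times> V" and acyclic_A: "acyclic A"
  and ex_root: "\<exists>\<rho>. is_root V A \<rho>" and label_in_V: "x \<in> X \<Longrightarrow> \<phi> x \<in> V"
  using rooted_cactus unfolding rooted_cactus_def rooted_DAG_def by auto

lemma finite_A: "finite A"
  using finite_subset[OF arcs_in_V] finite_V by auto

lemma arc_source_in_V: "(u, v) \<in> A \<Longrightarrow> u \<in> V" and arc_target_in_V: "(u, v) \<in> A \<Longrightarrow> v \<in> V"
  using arcs_in_V by auto

lemma leaf_is_label: "v \<in> V \<Longrightarrow> (\<And>w. (v, w) \<notin> A) \<Longrightarrow> v \<in> \<phi> ` X"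
  using rooted_cactus finite_A unfolding rooted_cactus_def is_leaf_def
  by (simp add: outdeg_eq_0_iff)

lemma indeg_le_1: "v \<in> V \<Longrightarrow> indeg A v \<le> 1"
  using no_reticulation unfolding is_reticulation_def by force

lemma unique_parents: "unique_parents A"
  unfolding unique_parents_def
proof (intro allI impI)
  fix u u' v assume "(u, v) \<in> A" "(u', v) \<in> A"
  with indeg_le_1[OF arc_target_in_V] indeg_le_1_iff[OF finite_A] show "u = u'" by blast
qed

lemma unique_parent: "(u, v) \<in> A \<Longrightarrow> (u', v) \<in> A \<Longrightarrow> u = u'"
  using unique_parents unfolding unique_parents_def by blast

lemma outdeg_1_is_label: "v \<in> V \<Longrightarrow> outdeg A v = 1 \<Longrightarrow> v \<in> \<phi> ` X"
  using rooted_cactus indeg_le_1 unfolding rooted_cactus_def is_tree_vertex_def by simp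

lemma time_stamp: "time_stamp X V A \<phi> r"
  using ranking unfolding ranking_def by simp

lemma rank_nonneg: "v \<in> V \<Longrightarrow> r v \<ge> 0"
  and rank_label: "x \<in> X \<Longrightarrow> r (\<phi> x) = 0"
  using time_stamp unfolding time_stamp_def by simp_all

lemma rank_arc_less: "(u, v) \<in> A \<Longrightarrow> r v < r u"
  using time_stamp no_reticulation[OF arc_target_in_V] unfolding time_stamp_def by fast

definition \<sigma> :: nat where "\<sigma> = ts_size V r"

lemma rank_image: "r ` V = real ` {0..\<sigma>}"
  using ranking unfolding ranking_def \<sigma>_def by simp

lemma rank_trancl_less: "(a, b) \<in> A\<^sup>+ \<Longrightarrow> r b < r a"
  by (induction rule: trancl_induct) (use rank_arc_less in force)+

lemma rank_rtrancl_le: "(a, b) \<in> A\<^sup>* \<Longrightarrow> r b \<le> r a"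
  by (metis eq_iff less_imp_le rank_trancl_less rtrancl_eq_or_trancl)

lemma rank_nat: "u \<in> V \<Longrightarrow> \<exists>k\<le>\<sigma>. r u = real k"
proof -
  assume "u \<in> V"
  then have "r u \<in> real ` {0..\<sigma>}" using rank_image by blast
  then show ?thesis by auto
qed

lemma label_childless: "x \<in> X \<Longrightarrow> (\<phi> x, c) \<notin> A"
proof
  assume "x \<in> X" "(\<phi> x, c) \<in> A"
  then have "r c < r (\<phi> x)" "r (\<phi> x) = 0" "r c \<ge> 0"
    using rank_arc_less rank_label rank_nonneg arc_target_in_V by blast+
  then show False by simp
qed

lemma second_child: "(u, c) \<in> A \<Longrightarrow> \<exists>c'. (u, c') \<in> A \<and> c' \<noteq> c"
proof (rule ccontr)
  assume arc: "(u, c) \<in> A" and only: "\<nexists>c'. (u, c') \<in> A \<and> c' \<noteq> c"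
  have "{w. (u, w) \<in> A} = {c}"
  proof
    show "{w. (u, w) \<in> A} \<subseteq> {c}" using only by blast
  qed (use arc in blast)
  then have "outdeg A u = 1" unfolding outdeg_eq_1_iff by (rule exI)
  then have "u \<in> \<phi> ` X" using outdeg_1_is_label[OF arc_source_in_V[OF arc]] by blast
  with arc label_childless show False by blast
qed

lemma root_unique: "is_root V A a \<Longrightarrow> is_root V A b \<Longrightarrow> a = b"
proof (rule ccontr)
  assume a: "is_root V A a" and b: "is_root V A b" and "a \<noteq> b"
  have "b \<in> V" using b unfolding is_root_def by simp
  then obtain p where p: "dpath A p" "hd p = a" "last p = b"
    using a unfolding is_root_def by auto
  then have "b \<in> set p" using last_in_set unfolding dpath_def by blast
  with p have "(a, b) \<in> A\<^sup>*" using dpath_rtrancl[OF p(1)] by simp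
  with \<open>a \<noteq> b\<close> have "(a, b) \<in> A\<^sup>+" by (simp add: rtrancl_eq_or_trancl)
  then obtain z where "(z, b) \<in> A" by (auto dest: tranclD2)
  moreover have "indeg A b = 0" using b unfolding is_root_def by simp
  ultimately show False using indeg_eq_0_iff[OF finite_A] by blast
qed

definition \<rho> :: 'v where "\<rho> = root V A"

lemma is_root: "is_root V A \<rho>"
proof -
  obtain a where "is_root V A a" using ex_root by blast
  then show ?thesis unfolding \<rho>_def root_def by (rule theI) (rule root_unique[OF _ \<open>is_root V A a\<close>])
qed

lemma root_in_V: "\<rho> \<in> V" and root_no_parent: "(u, \<rho>) \<notin> A"
  using is_root finite_A unfolding is_root_def by (simp_all add: indeg_eq_0_iff)

lemma root_reaches: "v \<in> V \<Longrightarrow> (\<rho>, v) \<in> A\<^sup>*"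
proof -
  assume "v \<in> V"
  then obtain p where p: "dpath A p" "hd p = \<rho>" "last p = v"
    using is_root unfolding is_root_def by auto
  then have "v \<in> set p" using last_in_set unfolding dpath_def by blast
  with p show ?thesis using dpath_rtrancl[OF p(1)] by simp
qed

lemma rtrancl_source_in_V: "(a, b) \<in> A\<^sup>* \<Longrightarrow> b \<in> V \<Longrightarrow> a \<in> V"
  by (cases rule: converse_rtranclE) (auto intro: arc_source_in_V)

text \<open>Since the root path of a vertex is unique, strict and ordinary descendants coincide.\<close>

lemma root_path_mem_iff:
  assumes u: "u \<in> V" and p: "p \<in> root_paths V A u"
  shows "w \<in> set p \<longleftrightarrow> (w, u) \<in> A\<^sup>*"
proof
  have path: "dpath A p" "hd p = \<rho>" "last p = u"
    using p unfolding root_paths_def \<rho>_def by simp_all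
  show "(w, u) \<in> A\<^sup>*" if "w \<in> set p"
    using dpath_rtrancl[OF path(1) that] path(3) by simp
  assume wu: "(w, u) \<in> A\<^sup>*"
  obtain q where q: "dpath A q" "hd q = w" "last q = u"
    using rtrancl_imp_dpath[OF wu] by blast
  have "w \<in> V" using rtrancl_source_in_V[OF wu u] .
  then obtain p' where p': "dpath A p'" "hd p' = \<rho>" "last p' = w"
    using is_root unfolding is_root_def by auto
  have "p' @ tl q = p"
    using dpath_append_tl[OF p'(1) q(1)] p' q path
    by (intro dpath_unique[OF unique_parents acyclic_A]) simp_all
  moreover have "w \<in> set p'" using p' last_in_set unfolding dpath_def by metis
  ultimately show "w \<in> set p" by (metis Un_iff set_append)
qed

lemma root_paths_nonempty: "u \<in> V \<Longrightarrow> \<exists>p. p \<in> root_paths V A u"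
  using is_root unfolding is_root_def root_paths_def \<rho>_def by auto

lemma strict_descendant_iff: "u \<in> V \<Longrightarrow> strict_descendant V A u w \<longleftrightarrow> (w, u) \<in> A\<^sup>*"
  unfolding strict_descendant_def using root_path_mem_iff root_paths_nonempty by blast

lemma descendant_iff: "u \<in> V \<Longrightarrow> descendant V A u w \<longleftrightarrow> (w, u) \<in> A\<^sup>*"
  unfolding descendant_def using root_path_mem_iff root_paths_nonempty by blast

definition cluster :: "'v \<Rightarrow> 'x set" where
  "cluster u = {x\<in>X. (u, \<phi> x) \<in> A\<^sup>*}"

lemma Sset_eq_cluster: "Sset X V A \<phi> u = cluster u"
  unfolding Sset_def cluster_def using strict_descendant_iff label_in_V by auto

lemma Hset_empty: "Hset X V A \<phi> u = {}"
  unfolding Hset_def nonstrict_descendant_def using strict_descendant_iff descendant_iff label_in_V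
  by auto

abbreviation level :: "nat \<Rightarrow> 'v set" where
  "level i \<equiv> level_vertices V A r i"

lemma Pcoll_Scoll_eq: "Pcoll (Scoll X V A \<phi> r i) = cluster ` level i"
  unfolding Pcoll_def Scoll_def Sset_eq_cluster Hset_empty by force

lemma ancestors_comparable: "(a, y) \<in> A\<^sup>* \<Longrightarrow> (b, y) \<in> A\<^sup>* \<Longrightarrow> (a, b) \<in> A\<^sup>* \<or> (b, a) \<in> A\<^sup>*"
  by (rule unique_parents_ancestors_comparable[OF unique_parents])

lemma cluster_antimono: "(u, v) \<in> A\<^sup>* \<Longrightarrow> cluster v \<subseteq> cluster u"
  unfolding cluster_def by auto

lemma label_below: "u \<in> V \<Longrightarrow> \<exists>x\<in>X. (u, \<phi> x) \<in> A\<^sup>*"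
proof -
  assume u: "u \<in> V"
  define D where "D = {w\<in>V. (u, w) \<in> A\<^sup>*}"
  have fin: "finite (r ` D)" and "u \<in> D" using finite_V u unfolding D_def by auto
  then have "Min (r ` D) \<in> r ` D" by (intro Min_in) auto
  then obtain w where w: "w \<in> D" "r w = Min (r ` D)" by auto
  have "(w, c) \<notin> A" for c
  proof
    assume arc: "(w, c) \<in> A"
    then have "c \<in> D" using w(1) arc_target_in_V unfolding D_def by auto
    then have "r w \<le> r c" using w(2) fin by simp
    with rank_arc_less[OF arc] show False by simp
  qed
  then have "w \<in> \<phi> ` X" using leaf_is_label w(1) unfolding D_def by blast
  then show ?thesis using w(1) unfolding D_def by blast
qed

lemma cluster_nonempty: "u \<in> V \<Longrightarrow> cluster u \<noteq> {}"
  using label_below unfolding cluster_def by blast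

lemma no_trancl_loop: "(u, u) \<notin> A\<^sup>+"
  using acyclic_A by (simp add: acyclic_def)

lemma no_path_between_siblings: "(u, c) \<in> A \<Longrightarrow> (u, c') \<in> A \<Longrightarrow> (c, c') \<notin> A\<^sup>+"
proof
  assume c: "(u, c) \<in> A" and c': "(u, c') \<in> A" and "(c, c') \<in> A\<^sup>+"
  then obtain z where "(c, z) \<in> A\<^sup>*" "(z, c') \<in> A" using tranclD2 by metis
  with c' have "(c, u) \<in> A\<^sup>*" using unique_parent by blast
  with c have "(u, u) \<in> A\<^sup>+" by (rule rtrancl_into_trancl2)
  then show False using no_trancl_loop by blast
qed

text \<open>A proper descendant misses the labels below a sibling, which exists because no tree vertex
  of outdegree one is unlabelled.\<close>

lemma cluster_psubset: "(u, v) \<in> A\<^sup>+ \<Longrightarrow> cluster v \<subset> cluster u"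
proof -
  assume uv: "(u, v) \<in> A\<^sup>+"
  obtain c where c: "(u, c) \<in> A" "(c, v) \<in> A\<^sup>*" using tranclD[OF uv] by blast
  obtain c' where c': "(u, c') \<in> A" "c' \<noteq> c" using second_child[OF c(1)] by blast
  obtain x where x: "x \<in> X" "(c', \<phi> x) \<in> A\<^sup>*"
    using label_below[OF arc_target_in_V[OF c'(1)]] by blast
  have "x \<in> cluster u"
    using c'(1) x unfolding cluster_def by (auto intro: converse_rtrancl_into_rtrancl)
  moreover have "x \<notin> cluster v"
  proof
    assume "x \<in> cluster v"
    then have "(c, \<phi> x) \<in> A\<^sup>*" using c(2) unfolding cluster_def by (auto intro: rtrancl_trans)
    then have "(c, c') \<in> A\<^sup>* \<or> (c', c) \<in> A\<^sup>*" using ancestors_comparable x(2) by blast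
    with c'(2) have "(c, c') \<in> A\<^sup>+ \<or> (c', c) \<in> A\<^sup>+" by (auto simp: rtrancl_eq_or_trancl)
    then show False using no_path_between_siblings c(1) c'(1) by blast
  qed
  ultimately show ?thesis using cluster_antimono[OF trancl_into_rtrancl[OF uv]] by blast
qed

lemma cluster_eq_imp_eq: "u \<in> V \<Longrightarrow> v \<in> V \<Longrightarrow> cluster u = cluster v \<Longrightarrow> u = v"
proof (rule ccontr)
  assume u: "u \<in> V" and v: "v \<in> V" and eq: "cluster u = cluster v" and "u \<noteq> v"
  obtain x where "x \<in> cluster u" using cluster_nonempty[OF u] by blast
  then have "(u, \<phi> x) \<in> A\<^sup>*" "(v, \<phi> x) \<in> A\<^sup>*" using eq unfolding cluster_def by auto
  with \<open>u \<noteq> v\<close> have "(u, v) \<in> A\<^sup>+ \<or> (v, u) \<in> A\<^sup>+"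
    using ancestors_comparable by (auto simp: rtrancl_eq_or_trancl)
  then show False using cluster_psubset eq by blast
qed

lemma cluster_root: "cluster \<rho> = X"
  using root_reaches label_in_V unfolding cluster_def by blast

lemma cluster_label_least: "x \<in> X \<Longrightarrow> w \<in> V \<Longrightarrow> x \<in> cluster w \<Longrightarrow> cluster (\<phi> x) \<subseteq> cluster w"
  using cluster_antimono unfolding cluster_def by simp

lemma label_in_cluster: "x \<in> X \<Longrightarrow> x \<in> cluster (\<phi> x)"
  unfolding cluster_def by simp

lemma cluster_psubset_iff: "u \<in> V \<Longrightarrow> v \<in> V \<Longrightarrow> cluster v \<subset> cluster u \<longleftrightarrow> (u, v) \<in> A\<^sup>+"
proof
  assume u: "u \<in> V" and v: "v \<in> V" and sub: "cluster v \<subset> cluster u"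
  obtain x where "x \<in> cluster v" using cluster_nonempty[OF v] by blast
  with sub have "(u, \<phi> x) \<in> A\<^sup>*" "(v, \<phi> x) \<in> A\<^sup>*" unfolding cluster_def by auto
  then have "(u, v) \<in> A\<^sup>* \<or> (v, u) \<in> A\<^sup>*" by (rule ancestors_comparable)
  moreover have "(v, u) \<notin> A\<^sup>*" using cluster_antimono sub by blast
  ultimately show "(u, v) \<in> A\<^sup>+" using sub by (auto simp: rtrancl_eq_or_trancl)
qed (rule cluster_psubset)

lemma arc_iff_trancl_no_between: "(u, v) \<in> A \<longleftrightarrow> (u, v) \<in> A\<^sup>+ \<and> \<not> (\<exists>w. (u, w) \<in> A\<^sup>+ \<and> (w, v) \<in> A\<^sup>+)"
proof safe
  fix w assume uv: "(u, v) \<in> A" and uw: "(u, w) \<in> A\<^sup>+" and "(w, v) \<in> A\<^sup>+"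
  then obtain z where "(w, z) \<in> A\<^sup>*" "(z, v) \<in> A" using tranclD2 by metis
  with uv have "(w, u) \<in> A\<^sup>*" using unique_parent by blast
  with uw have "(u, u) \<in> A\<^sup>+" by (rule trancl_rtrancl_trancl)
  then show False using no_trancl_loop by blast
next
  assume uv: "(u, v) \<in> A\<^sup>+" and no_between: "\<nexists>w. (u, w) \<in> A\<^sup>+ \<and> (w, v) \<in> A\<^sup>+"
  then obtain z where z: "(u, z) \<in> A\<^sup>*" "(z, v) \<in> A" using tranclD2 by metis
  show "(u, v) \<in> A"
  proof (cases "z = u")
    case False
    with z have "(u, z) \<in> A\<^sup>+" "(z, v) \<in> A\<^sup>+" by (auto simp: rtrancl_eq_or_trancl)
    with no_between show ?thesis by blast
  qed (use z in simp)
qed simp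

lemma arc_iff_cluster_cover:
  assumes u: "u \<in> V" and v: "v \<in> V"
  shows "(u, v) \<in> A \<longleftrightarrow>
    cluster v \<subset> cluster u \<and> \<not> (\<exists>w\<in>V. cluster v \<subset> cluster w \<and> cluster w \<subset> cluster u)"
proof -
  have "(\<exists>w. (u, w) \<in> A\<^sup>+ \<and> (w, v) \<in> A\<^sup>+) \<longleftrightarrow> (\<exists>w\<in>V. (u, w) \<in> A\<^sup>+ \<and> (w, v) \<in> A\<^sup>+)"
    by (metis arc_target_in_V tranclE)
  then show ?thesis
    unfolding arc_iff_trancl_no_between using cluster_psubset_iff u v by auto
qed

lemma level_iff: "u \<in> level i \<longleftrightarrow> u \<in> V \<and> r u \<le> real i \<and> (\<forall>p. (p, u) \<in> A \<longrightarrow> r p > real i)"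
  unfolding level_vertices_def by simp

lemma level_subset_V: "level i \<subseteq> V"
  unfolding level_vertices_def by blast

text \<open>The level-\<open>i\<close> ancestor of a leaf is its highest ancestor of rank at most \<open>i\<close>.\<close>

lemma ex_level_ancestor:
  assumes x: "x \<in> X" shows "\<exists>u\<in>level i. (u, \<phi> x) \<in> A\<^sup>*"
proof -
  define S where "S = {w\<in>V. (w, \<phi> x) \<in> A\<^sup>* \<and> r w \<le> real i}"
  have fin: "finite (r ` S)" using finite_V unfolding S_def by auto
  have "\<phi> x \<in> S" using label_in_V[OF x] rank_label[OF x] unfolding S_def by simp
  then have "Max (r ` S) \<in> r ` S" using fin by (intro Max_in) auto
  then obtain w where w: "w \<in> S" "r w = Max (r ` S)" by auto
  have "r p > real i" if p: "(p, w) \<in> A" for p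
  proof (rule ccontr)
    assume "\<not> r p > real i"
    moreover have "(p, \<phi> x) \<in> A\<^sup>*"
      using p w(1) unfolding S_def by (simp add: converse_rtrancl_into_rtrancl)
    ultimately have "p \<in> S" using arc_source_in_V[OF p] unfolding S_def by simp
    then have "r p \<le> r w" using fin w(2) by simp
    with rank_arc_less[OF p] show False by simp
  qed
  with w(1) have "w \<in> level i" unfolding level_iff S_def by simp
  with w(1) show ?thesis unfolding S_def by blast
qed

lemma level_no_trancl:
  assumes u: "u \<in> level j" and w: "w \<in> level k" and "j \<le> k"
  shows "(u, w) \<notin> A\<^sup>+"
proof
  assume "(u, w) \<in> A\<^sup>+"
  then obtain z where z: "(u, z) \<in> A\<^sup>*" "(z, w) \<in> A" using tranclD2 by metis
  have "r z \<le> r u" "r u \<le> real j" "r z > real k"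
    using rank_rtrancl_le[OF z(1)] u w z(2) unfolding level_iff by auto
  with \<open>j \<le> k\<close> show False by simp
qed

lemma level_ancestor_unique:
  assumes "u \<in> level i" "u' \<in> level i" "(u, y) \<in> A\<^sup>*" "(u', y) \<in> A\<^sup>*"
  shows "u = u'"
  using ancestors_comparable[OF assms(3,4)]
    level_no_trancl[OF assms(1,2)] level_no_trancl[OF assms(2,1)]
  by (auto simp: rtrancl_eq_or_trancl)

lemma partition_on_level_clusters: "partition_on X (cluster ` level i)"
proof (rule partition_onI)
  show "\<Union> (cluster ` level i) = X"
    using ex_level_ancestor unfolding cluster_def by fastforce
  show "{} \<notin> cluster ` level i"
    using cluster_nonempty level_subset_V by fastforce
  fix p q assume "p \<in> cluster ` level i" "q \<in> cluster ` level i" "p \<noteq> q"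
  then obtain u u' where u: "u \<in> level i" "p = cluster u" and u': "u' \<in> level i" "q = cluster u'"
    by blast
  have "x \<notin> q" if "x \<in> p" for x
    using that u u' \<open>p \<noteq> q\<close> level_ancestor_unique unfolding cluster_def by blast
  then show "disjnt p q" unfolding disjnt_def by blast
qed

lemma level_clusters_refine:
  assumes "j \<le> k" shows "refines (cluster ` level j) (cluster ` level k)"
  unfolding refines_def
proof
  fix B assume "B \<in> cluster ` level j"
  then obtain u where u: "u \<in> level j" "B = cluster u" by blast
  have "u \<in> V" using u(1) level_subset_V by blast
  then obtain x where "x \<in> cluster u" using cluster_nonempty by blast
  then have "x \<in> X" "(u, \<phi> x) \<in> A\<^sup>*" unfolding cluster_def by simp_all
  then obtain w where w: "w \<in> level k" "(w, \<phi> x) \<in> A\<^sup>*" using ex_level_ancestor by blast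
  have "(w, u) \<in> A\<^sup>*"
    using ancestors_comparable[OF \<open>(u, \<phi> x) \<in> A\<^sup>*\<close> w(2)] level_no_trancl[OF u(1) w(1) assms]
    by (auto simp: rtrancl_eq_or_trancl)
  then show "\<exists>B'\<in>cluster ` level k. B \<subseteq> B'" using u(2) w(1) cluster_antimono by blast
qed

lemma rank_le_sigma: "u \<in> V \<Longrightarrow> r u \<le> real \<sigma>"
  using rank_nat by fastforce

lemma in_level_of_rank: "u \<in> V \<Longrightarrow> r u = real k \<Longrightarrow> u \<in> level k"
  unfolding level_iff using rank_arc_less by fastforce

lemma level_sigma: "level \<sigma> = {\<rho>}"
proof
  show "level \<sigma> \<subseteq> {\<rho>}"
  proof
    fix u assume u: "u \<in> level \<sigma>"
    show "u \<in> {\<rho>}"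
    proof (rule ccontr)
      assume "u \<notin> {\<rho>}"
      with root_reaches[of u] u have "(\<rho>, u) \<in> A\<^sup>+"
        using level_subset_V by (auto simp: rtrancl_eq_or_trancl)
      then obtain z where "(z, u) \<in> A" using tranclD2 by metis
      then have "r z \<le> real \<sigma>" "r z > real \<sigma>"
        using rank_le_sigma[OF arc_source_in_V] u unfolding level_iff by auto
      then show False by simp
    qed
  qed
  show "{\<rho>} \<subseteq> level \<sigma>"
    using root_in_V rank_le_sigma root_no_parent by (simp add: level_iff)
qed

lemma rank_le_if_cluster_in_level: "u \<in> V \<Longrightarrow> cluster u \<in> cluster ` level j \<Longrightarrow> r u \<le> real j"
proof -
  assume u: "u \<in> V" and "cluster u \<in> cluster ` level j"
  then obtain w where w: "w \<in> level j" "cluster u = cluster w" by blast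
  with u level_subset_V have "u = w" using cluster_eq_imp_eq by blast
  with w(1) show ?thesis unfolding level_iff by simp
qed

lemma level_clusters_distinct:
  assumes "j < k" "k \<le> \<sigma>" shows "cluster ` level j \<noteq> cluster ` level k"
proof -
  obtain w where w: "w \<in> V" "r w = real k" using rank_image assms(2) by force
  then have "cluster w \<in> cluster ` level k" using in_level_of_rank by blast
  moreover have "cluster w \<notin> cluster ` level j"
    using rank_le_if_cluster_in_level[OF w(1)] w(2) assms(1) by force
  ultimately show ?thesis by blast
qed

definition level_chain :: "'x set set set" where
  "level_chain = {cluster ` level i | i. i \<le> \<sigma>}"

lemma partition_chain_of_eq: "partition_chain_of X (V, A, \<phi>, r) = level_chain"
  unfolding partition_chain_of_def level_chain_def \<sigma>_def by (simp add: Pcoll_Scoll_eq)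

lemma level_chain_in_chains_with_top: "level_chain \<in> chains_with_top X"
proof -
  have "level_chain \<subseteq> partitions X"
    using partition_on_level_clusters unfolding level_chain_def partitions_def by blast
  moreover have "{X} \<in> level_chain"
    using level_sigma cluster_root unfolding level_chain_def by force
  moreover have "refines P Q \<or> refines Q P" if "P \<in> level_chain" "Q \<in> level_chain" for P Q
    using that level_clusters_refine nat_le_linear unfolding level_chain_def by blast
  ultimately show ?thesis unfolding chains_with_top_def by blast
qed

lemma chain_height_level_chain:
  assumes k: "k \<le> \<sigma>" shows "chain_height level_chain (cluster ` level k) = k"
proof -
  let ?P = "\<lambda>j. cluster ` level j"
  have "{Q\<in>level_chain. refines Q (?P k) \<and> Q \<noteq> ?P k} = ?P ` {..<k}"
  proof (intro equalityI subsetI)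
    fix Q assume "Q \<in> {Q\<in>level_chain. refines Q (?P k) \<and> Q \<noteq> ?P k}"
    then obtain j where j: "Q = ?P j" "refines (?P j) (?P k)" "?P j \<noteq> ?P k"
      unfolding level_chain_def by blast
    have "j < k"
    proof (rule ccontr)
      assume "\<not> j < k"
      then have "refines (?P k) (?P j)" using level_clusters_refine by simp
      with j show False using partition_refines_antisym partition_on_level_clusters by blast
    qed
    with j(1) show "Q \<in> ?P ` {..<k}" by blast
  next
    fix Q assume "Q \<in> ?P ` {..<k}"
    then obtain j where j: "j < k" "Q = ?P j" by blast
    then have "?P j \<noteq> ?P k" "refines (?P j) (?P k)" "?P j \<in> level_chain"
      using level_clusters_distinct[OF j(1) k] level_clusters_refine[of j k] k
      unfolding level_chain_def by auto
    with j(2) show "Q \<in> {Q\<in>level_chain. refines Q (?P k) \<and> Q \<noteq> ?P k}" by blast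
  qed
  moreover have "inj_on ?P {..<k}"
  proof (rule inj_onI)
    fix i j assume "i \<in> {..<k}" "j \<in> {..<k}" "?P i = ?P j"
    then show "i = j" using level_clusters_distinct k
      by (metis lessThan_iff less_imp_le_nat linorder_neqE_nat order.strict_trans2)
  qed
  ultimately show ?thesis unfolding chain_height_def by (simp add: card_image)
qed

lemma rank_eq_block_rank:
  assumes "finite X" and u: "u \<in> V"
  shows "r u = real (block_rank level_chain (cluster u))"
proof -
  interpret partition_chain X level_chain
    using level_chain_in_chains_with_top \<open>finite X\<close> by unfold_locales
  obtain k where k: "k \<le> \<sigma>" "r u = real k" using rank_nat[OF u] by blast
  have in_chain: "cluster ` level k \<in> level_chain" unfolding level_chain_def using k(1) by blast
  have in_level: "cluster u \<in> cluster ` level k" using in_level_of_rank[OF u k(2)] by blast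
  have B: "cluster u \<in> blocks" using in_chain in_level unfolding blocks_def by blast
  define b where "b = block_rank level_chain (cluster u)"
  have "b \<le> k"
    using block_rank_le[OF in_chain in_level] chain_height_level_chain[OF k(1)]
    unfolding b_def by simp
  have b: "b < card level_chain" using block_rank_less_card[OF B] unfolding b_def .
  then obtain j where j: "j \<le> \<sigma>" "nth_partition b = cluster ` level j"
    using nth_partition_in_chain unfolding level_chain_def by blast
  then have "b = j"
    using chain_height_nth_partition[OF b] chain_height_level_chain[OF j(1)] by simp
  moreover have "cluster u \<in> cluster ` level j"
    using block_in_nth_partition_rank[OF B] j(2) unfolding b_def by simp
  then have "k \<le> j" using rank_le_if_cluster_in_level[OF u] k(2) by simp
  ultimately show ?thesis using \<open>b \<le> k\<close> k(2) unfolding b_def by simp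
qed

lemma cluster_image: "cluster ` V = \<Union> level_chain"
proof
  show "cluster ` V \<subseteq> \<Union> level_chain"
  proof
    fix B assume "B \<in> cluster ` V"
    then obtain u where u: "u \<in> V" "B = cluster u" by blast
    then obtain k where "k \<le> \<sigma>" "r u = real k" using rank_nat by blast
    with u show "B \<in> \<Union> level_chain"
      using in_level_of_rank unfolding level_chain_def by blast
  qed
  show "\<Union> level_chain \<subseteq> cluster ` V" using level_subset_V unfolding level_chain_def by blast
qed

lemma bij_betw_cluster: "bij_betw cluster V (\<Union> level_chain)"
  unfolding bij_betw_def using cluster_eq_imp_eq cluster_image by (auto intro: inj_onI)

lemma arc_iff_cover_in_level_chain:
  assumes "u \<in> V" "v \<in> V"
  shows "(u, v) \<in> A \<longleftrightarrow>
    cluster v \<subset> cluster u \<and> \<not> (\<exists>B\<in>\<Union> level_chain. cluster v \<subset> B \<and> B \<subset> cluster u)"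
  unfolding arc_iff_cluster_cover[OF assms] cluster_image[symmetric] by blast

lemma cluster_label_least_in_level_chain:
  "x \<in> X \<Longrightarrow> B \<in> \<Union> level_chain \<Longrightarrow> x \<in> B \<Longrightarrow> cluster (\<phi> x) \<subseteq> B"
proof -
  assume x: "x \<in> X" and "B \<in> \<Union> level_chain" and "x \<in> B"
  then obtain w where "w \<in> V" "B = cluster w" unfolding cluster_image[symmetric] by blast
  with x \<open>x \<in> B\<close> show ?thesis using cluster_label_least by blast
qed

end

section \<open>Isomorphic ranked trees\<close>

lemma rtrancl_map: "(\<And>u v. (u, v) \<in> A \<Longrightarrow> (f u, f v) \<in> B) \<Longrightarrow> (a, b) \<in> A\<^sup>* \<Longrightarrow> (f a, f b) \<in> B\<^sup>*"
proof -
  assume arcs: "\<And>u v. (u, v) \<in> A \<Longrightarrow> (f u, f v) \<in> B"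
  show "(a, b) \<in> A\<^sup>* \<Longrightarrow> (f a, f b) \<in> B\<^sup>*"
    by (induction rule: rtrancl_induct) (auto dest: arcs intro: rtrancl_into_rtrancl)
qed

lemma rtrancl_iso:
  assumes f: "bij_betw f V1 V2" and A1: "A1 \<subseteq> V1 \<times> V1" and A2: "A2 \<subseteq> V2 \<times> V2"
    and arcs: "\<And>u v. u \<in> V1 \<Longrightarrow> v \<in> V1 \<Longrightarrow> (u, v) \<in> A1 \<longleftrightarrow> (f u, f v) \<in> A2"
    and u: "u \<in> V1" and w: "w \<in> V1"
  shows "(f u, f w) \<in> A2\<^sup>* \<longleftrightarrow> (u, w) \<in> A1\<^sup>*"
proof
  have "(f p, f q) \<in> A2" if "(p, q) \<in> A1" for p q
    using that arcs A1 by blast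
  then show "(u, w) \<in> A1\<^sup>* \<Longrightarrow> (f u, f w) \<in> A2\<^sup>*"
    using rtrancl_map[of A1 f A2 u w] by blast
  define g where "g = inv_into V1 f"
  have g: "v \<in> V1 \<Longrightarrow> g (f v) = v" for v
    using f unfolding g_def bij_betw_def by (simp add: inv_into_f_f)
  have "(g p, g q) \<in> A1" if "(p, q) \<in> A2" for p q
  proof -
    from that A2 f obtain p' q' where "p' \<in> V1" "q' \<in> V1" "p = f p'" "q = f q'"
      unfolding bij_betw_def by blast
    with that show ?thesis using arcs g by simp
  qed
  then show "(f u, f w) \<in> A2\<^sup>* \<Longrightarrow> (u, w) \<in> A1\<^sup>*"
    using rtrancl_map[of A2 g A1 "f u" "f w"] g u w by simp
qed

lemma level_vertices_iso:
  assumes f: "bij_betw f V1 V2" and A1: "A1 \<subseteq> V1 \<times> V1" and A2: "A2 \<subseteq> V2 \<times> V2"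
    and arcs: "\<And>u v. u \<in> V1 \<Longrightarrow> v \<in> V1 \<Longrightarrow> (u, v) \<in> A1 \<longleftrightarrow> (f u, f v) \<in> A2"
    and ranks: "\<And>v. v \<in> V1 \<Longrightarrow> r1 v = r2 (f v)"
  shows "level_vertices V2 A2 r2 k = f ` level_vertices V1 A1 r1 k"
proof -
  have parents: "(\<forall>p. (p, f u) \<in> A2 \<longrightarrow> r2 p > real k) \<longleftrightarrow> (\<forall>p. (p, u) \<in> A1 \<longrightarrow> r1 p > real k)"
    if u: "u \<in> V1" for u
  proof -
    have pre: "(p, f u) \<in> A2 \<longleftrightarrow> (\<exists>q\<in>V1. p = f q \<and> (q, u) \<in> A1)" for p
    proof
      assume "(p, f u) \<in> A2"
      moreover from this obtain q where "q \<in> V1" "p = f q"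
        using A2 f unfolding bij_betw_def by blast
      ultimately show "\<exists>q\<in>V1. p = f q \<and> (q, u) \<in> A1" using arcs u by blast
    qed (use arcs u in blast)
    have "(q, u) \<in> A1 \<Longrightarrow> q \<in> V1" for q using A1 by blast
    then show ?thesis unfolding pre using ranks by auto
  qed
  have "u \<in> level_vertices V1 A1 r1 k \<longleftrightarrow> f u \<in> level_vertices V2 A2 r2 k" if "u \<in> V1" for u
    using that parents[OF that] ranks[OF that] f unfolding level_vertices_def bij_betw_def by auto
  moreover have "level_vertices V2 A2 r2 k \<subseteq> f ` V1" "level_vertices V1 A1 r1 k \<subseteq> V1"
    using f unfolding level_vertices_def bij_betw_def by auto
  ultimately show ?thesis by blast
qed

lemma ts_size_iso:
  assumes "bij_betw f V1 V2" and "\<And>v. v \<in> V1 \<Longrightarrow> r1 v = r2 (f v)"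
  shows "ts_size V2 r2 = ts_size V1 r1"
proof -
  have "r2 ` V2 = r1 ` V1"
    using assms unfolding bij_betw_def by (auto simp: image_iff)
  then show ?thesis unfolding ts_size_def by simp
qed

lemma level_chain_eq_if_ranked_iso:
  assumes T1: "ranked_X_tree X V1 A1 \<phi>1 r1" and T2: "ranked_X_tree X V2 A2 \<phi>2 r2"
    and iso: "ranked_iso X (V1, A1, \<phi>1, r1) (V2, A2, \<phi>2, r2)"
  shows "ranked_X_tree.level_chain X V1 A1 \<phi>1 r1 = ranked_X_tree.level_chain X V2 A2 \<phi>2 r2"
proof -
  interpret T1: ranked_X_tree X V1 A1 \<phi>1 r1 by (rule T1)
  interpret T2: ranked_X_tree X V2 A2 \<phi>2 r2 by (rule T2)
  obtain f where f: "bij_betw f V1 V2"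
    and arcs: "\<And>u v. u \<in> V1 \<Longrightarrow> v \<in> V1 \<Longrightarrow> (u, v) \<in> A1 \<longleftrightarrow> (f u, f v) \<in> A2"
    and labels: "\<And>x. x \<in> X \<Longrightarrow> f (\<phi>1 x) = \<phi>2 x"
    and ranks: "\<And>v. v \<in> V1 \<Longrightarrow> r1 v = r2 (f v)"
    using iso unfolding ranked_iso_def by auto
  have cluster: "T2.cluster (f u) = T1.cluster u" if "u \<in> V1" for u
    using rtrancl_iso[OF f T1.arcs_in_V T2.arcs_in_V arcs that T1.label_in_V] labels
    unfolding T1.cluster_def T2.cluster_def by auto
  have level: "T2.level k = f ` T1.level k" for k
    by (rule level_vertices_iso[OF f T1.arcs_in_V T2.arcs_in_V arcs]) (simp_all add: ranks)
  have "T2.cluster ` T2.level k = T1.cluster ` T1.level k" for k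
    unfolding level image_image
    by (rule image_cong[OF refl]) (use cluster T1.level_subset_V in blast)
  moreover have "T2.\<sigma> = T1.\<sigma>"
    unfolding T1.\<sigma>_def T2.\<sigma>_def by (rule ts_size_iso[OF f]) (simp add: ranks)
  ultimately show ?thesis unfolding T1.level_chain_def T2.level_chain_def by simp
qed

lemma ranked_iso_if_level_chain_eq:
  assumes "finite X" and T1: "ranked_X_tree X V1 A1 \<phi>1 r1" and T2: "ranked_X_tree X V2 A2 \<phi>2 r2"
    and eq: "ranked_X_tree.level_chain X V1 A1 \<phi>1 r1 = ranked_X_tree.level_chain X V2 A2 \<phi>2 r2"
  shows "ranked_iso X (V1, A1, \<phi>1, r1) (V2, A2, \<phi>2, r2)"
proof -
  interpret T1: ranked_X_tree X V1 A1 \<phi>1 r1 by (rule T1)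
  interpret T2: ranked_X_tree X V2 A2 \<phi>2 r2 by (rule T2)
  define F where "F = \<Union> T1.level_chain"
  define f where "f = inv_into V2 T2.cluster \<circ> T1.cluster"
  have f: "bij_betw f V1 V2" unfolding f_def
    by (rule bij_betw_trans[OF T1.bij_betw_cluster])
      (use bij_betw_inv_into[OF T2.bij_betw_cluster] eq in simp)
  have f_cluster: "f u \<in> V2 \<and> T2.cluster (f u) = T1.cluster u" if "u \<in> V1" for u
  proof -
    have "T1.cluster u \<in> \<Union> T1.level_chain" using that T1.cluster_image by blast
    then have "T1.cluster u \<in> T2.cluster ` V2" unfolding eq T2.cluster_image .
    then show ?thesis unfolding f_def by (simp add: f_inv_into_f inv_into_into)
  qed
  have "(u, v) \<in> A1 \<longleftrightarrow> (f u, f v) \<in> A2" if "u \<in> V1" "v \<in> V1" for u v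
    using T1.arc_iff_cover_in_level_chain[OF that] T2.arc_iff_cover_in_level_chain
      f_cluster[OF that(1)] f_cluster[OF that(2)] eq by simp
  moreover have "f (\<phi>1 x) = \<phi>2 x" if x: "x \<in> X" for x
  proof -
    have "T1.cluster (\<phi>1 x) \<in> F" "T2.cluster (\<phi>2 x) \<in> F"
      using T1.label_in_V[OF x] T2.label_in_V[OF x] T1.cluster_image T2.cluster_image
      unfolding F_def eq by blast+
    then have "T1.cluster (\<phi>1 x) \<subseteq> T2.cluster (\<phi>2 x)" "T2.cluster (\<phi>2 x) \<subseteq> T1.cluster (\<phi>1 x)"
      using T1.cluster_label_least_in_level_chain[OF x] T2.cluster_label_least_in_level_chain[OF x]
        T1.label_in_cluster[OF x] T2.label_in_cluster[OF x] unfolding F_def eq by blast+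
    then have "T1.cluster (\<phi>1 x) = T2.cluster (\<phi>2 x)" by (rule subset_antisym)
    then show ?thesis
      using f_cluster[OF T1.label_in_V[OF x]] T2.cluster_eq_imp_eq[OF _ T2.label_in_V[OF x]] by simp
  qed
  moreover have "r1 v = r2 (f v)" if "v \<in> V1" for v
    using T1.rank_eq_block_rank[OF \<open>finite X\<close> that] T2.rank_eq_block_rank[OF \<open>finite X\<close>]
      f_cluster[OF that] eq by simp
  ultimately show ?thesis unfolding ranked_iso_def using f by auto
qed

section \<open>Realising a chain by a ranked tree\<close>

lemma ranked_treeI:
  fixes V :: "'v set" and A :: "('v \<times> 'v) set" and \<phi> :: "'x \<Rightarrow> 'v" and r :: "'v \<Rightarrow> real"
  assumes "finite V" and "A \<subseteq> V \<times> V" and "acyclic A" and "unique_parents A"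
    and "\<rho> \<in> V" and "\<And>u. (u, \<rho>) \<notin> A" and "\<And>v. v \<in> V \<Longrightarrow> (\<rho>, v) \<in> A\<^sup>*"
    and label_in_V: "\<And>x. x \<in> X \<Longrightarrow> \<phi> x \<in> V"
    and childless: "\<And>v. v \<in> V \<Longrightarrow> (\<And>w. (v, w) \<notin> A) \<Longrightarrow> v \<in> \<phi> ` X"
    and branching: "\<And>v c. (v, c) \<in> A \<Longrightarrow> \<exists>c'. (v, c') \<in> A \<and> c' \<noteq> c"
    and "\<And>v. v \<in> V \<Longrightarrow> r v \<ge> 0" and "\<And>x. x \<in> X \<Longrightarrow> r (\<phi> x) = 0"
    and "\<And>u v. (u, v) \<in> A \<Longrightarrow> r v < r u"
    and "r ` V = real ` {0..ts_size V r}"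
  shows "ranked_tree X V A \<phi> r"
proof -
  have finite_A: "finite A" by (rule finite_subset[OF assms(2)]) (simp add: assms(1))
  then have indeg: "indeg A v \<le> 1" for v
    using \<open>unique_parents A\<close> unique_parents_iff_indeg by blast
  then have no_reticulation: "\<not> is_reticulation V A v" for v
    using indeg[of v] unfolding is_reticulation_def by arith
  have "is_root V A \<rho>"
    unfolding is_root_def using assms(5,6) rtrancl_imp_dpath[OF assms(7)]
    by (simp add: indeg_eq_0_iff[OF finite_A])
  then have "rooted_DAG V A" unfolding rooted_DAG_def using assms(1-3) by auto
  moreover have "\<not> reticulation_cycle A Cy" for Cy
    using no_reticulation_cycle assms(3,4) by blast
  moreover have "v \<in> \<phi> ` X" if "outdeg A v = 1" for v
  proof -
    from \<open>outdeg A v = 1\<close> obtain c where "{w. (v, w) \<in> A} = {c}" unfolding outdeg_eq_1_iff ..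
    then have "(v, c) \<in> A" by blast
    then obtain c' where "(v, c') \<in> A" "c' \<noteq> c" using branching by blast
    with \<open>{w. (v, w) \<in> A} = {c}\<close> show ?thesis by blast
  qed
  moreover have "v \<in> \<phi> ` X" if "v \<in> V" "outdeg A v = 0" for v
    using childless that outdeg_eq_0_iff[OF finite_A] by blast
  moreover have "indeg A v \<le> 2" for v using indeg[of v] by simp
  ultimately have "rooted_cactus X V A \<phi>"
    unfolding rooted_cactus_def is_leaf_def is_tree_vertex_def using label_in_V by blast
  moreover have "time_stamp X V A \<phi> r"
    unfolding time_stamp_def using assms(11-13) no_reticulation by fast
  ultimately show ?thesis
    unfolding ranked_tree_def rooted_tree_def ranking_def using no_reticulation assms(14) by simp
qed

locale chain_realisation = partition_chain X C
  for X :: "'x set" and C :: "'x set set set" +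
  fixes V :: "'v set" and h :: "'v \<Rightarrow> 'x set"
  assumes nonempty: "X \<noteq> {}" and bij_h: "bij_betw h V blocks"
begin

definition vertex :: "'x set \<Rightarrow> 'v" where
  "vertex = inv_into V h"

definition tree_arcs :: "('v \<times> 'v) set" where
  "tree_arcs = {(u, v). u \<in> V \<and> v \<in> V \<and> covers (h u) (h v)}"

definition tree_label :: "'x \<Rightarrow> 'v" where
  "tree_label x = vertex (least_block x)"

definition tree_rank :: "'v \<Rightarrow> real" where
  "tree_rank v = real (block_rank C (h v))"

lemma finite_V: "finite V"
  using bij_betw_finite[OF bij_h] finite_blocks by simp

lemma h_in_blocks: "v \<in> V \<Longrightarrow> h v \<in> blocks"
  and vertex_in_V: "B \<in> blocks \<Longrightarrow> vertex B \<in> V"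
  and h_vertex: "B \<in> blocks \<Longrightarrow> h (vertex B) = B"
  and vertex_h: "v \<in> V \<Longrightarrow> vertex (h v) = v"
  using bij_h unfolding vertex_def bij_betw_def
  by (auto simp: inv_into_into f_inv_into_f inv_into_f_f)

lemma tree_arcs_iff: "(u, v) \<in> tree_arcs \<longleftrightarrow> u \<in> V \<and> v \<in> V \<and> covers (h u) (h v)"
  unfolding tree_arcs_def by simp

lemma tree_arcs_in_V: "tree_arcs \<subseteq> V \<times> V"
  unfolding tree_arcs_def by blast

lemma arc_vertex_iff: "B \<in> blocks \<Longrightarrow> D \<in> blocks \<Longrightarrow> (vertex B, vertex D) \<in> tree_arcs \<longleftrightarrow> covers B D"
  unfolding tree_arcs_iff using vertex_in_V h_vertex by simp

lemma trancl_tree_arcs_psubset: "(u, w) \<in> tree_arcs\<^sup>+ \<Longrightarrow> h w \<subset> h u"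
  by (induction rule: trancl_induct) (auto simp: tree_arcs_iff covers_def)

lemma rtrancl_tree_arcs_iff:
  assumes u: "u \<in> V" and w: "w \<in> V"
  shows "(u, w) \<in> tree_arcs\<^sup>* \<longleftrightarrow> h w \<subseteq> h u"
proof
  show "(u, w) \<in> tree_arcs\<^sup>* \<Longrightarrow> h w \<subseteq> h u"
    using trancl_tree_arcs_psubset by (auto simp: rtrancl_eq_or_trancl)
  have "(vertex B, vertex D) \<in> tree_arcs\<^sup>*" if "(B, D) \<in> {(B, D). covers B D}\<^sup>*" for B D
    using that
  proof (induction rule: rtrancl_induct)
    case (step D E)
    then have "(vertex D, vertex E) \<in> tree_arcs" using arc_vertex_iff covers_def by auto
    with step.IH show ?case by simp
  qed simp
  moreover assume "h w \<subseteq> h u"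
  ultimately show "(u, w) \<in> tree_arcs\<^sup>*"
    using covers_rtrancl[OF h_in_blocks[OF w] h_in_blocks[OF u]] vertex_h u w by metis
qed

lemma acyclic_tree_arcs: "acyclic tree_arcs"
  unfolding acyclic_def using trancl_tree_arcs_psubset by blast

lemma unique_parents_tree_arcs: "unique_parents tree_arcs"
  unfolding unique_parents_def
proof (intro allI impI)
  fix u u' v assume "(u, v) \<in> tree_arcs" "(u', v) \<in> tree_arcs"
  then have cov: "covers (h u) (h v)" "covers (h u') (h v)" and V: "u \<in> V" "u' \<in> V" "v \<in> V"
    unfolding tree_arcs_iff by simp_all
  obtain x where "x \<in> h v" using block_nonempty[OF h_in_blocks[OF V(3)]] by blast
  with cov have "x \<in> h u" "x \<in> h u'" unfolding covers_def by blast+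
  then have "h u \<subseteq> h u' \<or> h u' \<subseteq> h u" using blocks_laminar h_in_blocks V by blast
  with cov have "h u = h u'" unfolding covers_def by blast
  then show "u = u'" using vertex_h V by metis
qed

definition tree_root :: 'v where
  "tree_root = vertex X"

lemma tree_root_in_V: "tree_root \<in> V" and h_tree_root: "h tree_root = X"
  unfolding tree_root_def using vertex_in_V h_vertex top_block by simp_all

lemma tree_root_no_parent: "(u, tree_root) \<notin> tree_arcs"
proof
  assume "(u, tree_root) \<in> tree_arcs"
  then have "u \<in> V" "covers (h u) X" using h_tree_root unfolding tree_arcs_iff by simp_all
  then show False using block_subset[OF h_in_blocks] unfolding covers_def by blast
qed

lemma tree_root_reaches: "v \<in> V \<Longrightarrow> (tree_root, v) \<in> tree_arcs\<^sup>*"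
  unfolding rtrancl_tree_arcs_iff[OF tree_root_in_V] h_tree_root
  by (rule block_subset[OF h_in_blocks])

lemma tree_label_in_V: "x \<in> X \<Longrightarrow> tree_label x \<in> V"
  and h_tree_label: "x \<in> X \<Longrightarrow> h (tree_label x) = least_block x"
  unfolding tree_label_def using vertex_in_V h_vertex least_block_in_blocks by simp_all

text \<open>A block without a cover below it is the least block of each of its elements.\<close>

lemma childless_is_tree_label:
  assumes v: "v \<in> V" and childless: "\<And>w. (v, w) \<notin> tree_arcs"
  shows "v \<in> tree_label ` X"
proof -
  obtain x where x: "x \<in> h v" using block_nonempty[OF h_in_blocks[OF v]] by blast
  then have "x \<in> X" using block_subset h_in_blocks v by blast
  then have least: "least_block x \<in> blocks" "least_block x \<subseteq> h v"
    using least_block_in_blocks least_block_subset x h_in_blocks[OF v] by blast+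
  have "least_block x = h v"
  proof (rule ccontr)
    assume "least_block x \<noteq> h v"
    with least obtain E where "covers (h v) E"
      using ex_cover_above h_in_blocks[OF v] by blast
    then have "(v, vertex E) \<in> tree_arcs"
      using arc_vertex_iff[of "h v" E] h_in_blocks[OF v] vertex_h[OF v] covers_def by metis
    with childless show False by blast
  qed
  then have "tree_label x = v" unfolding tree_label_def using vertex_h[OF v] by simp
  with \<open>x \<in> X\<close> show ?thesis by blast
qed

text \<open>The partition just below the rank of \<open>h v\<close> splits \<open>h v\<close>; a part missing \<open>h c\<close> lies below a
  second child.\<close>

lemma tree_arcs_branching:
  assumes arc: "(v, c) \<in> tree_arcs"
  shows "\<exists>c'. (v, c') \<in> tree_arcs \<and> c' \<noteq> c"
proof -
  have v: "v \<in> V" and cov: "covers (h v) (h c)" and c: "c \<in> V"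
    using arc unfolding tree_arcs_iff by simp_all
  have hv: "h v \<in> blocks" and hc: "h c \<in> blocks" using h_in_blocks v c by simp_all
  have "block_rank C (h c) < block_rank C (h v)"
    using block_rank_strict_mono[OF hc hv] cov unfolding covers_def by simp
  then obtain j where j: "block_rank C (h v) = Suc j"
    by (metis less_nat_zero_code not0_implies_Suc)
  then have jC: "j < card C" using block_rank_less_card[OF hv] by simp
  obtain y where y: "y \<in> h v" "y \<notin> h c" using cov unfolding covers_def by blast
  then have "y \<in> X" using block_subset[OF hv] by blast
  then obtain D where D: "D \<in> nth_partition j" "y \<in> D"
    using partition_onD1[OF partition_on_nth_partition[OF jC]] by blast
  have DB: "D \<in> blocks" using nth_partition_block[OF jC D(1)] .
  have rD: "block_rank C D \<le> j" using block_rank_le_iff[OF DB jC] D(1) by blast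
  have "\<not> h v \<subseteq> D" using block_rank_mono[OF hv DB] rD j by linarith
  with blocks_laminar[OF DB hv D(2) y(1)] have "D \<subset> h v" by blast
  then obtain E where E: "D \<subseteq> E" "covers (h v) E"
    using ex_cover_above[OF DB hv] by blast
  then have EB: "E \<in> blocks" unfolding covers_def by simp
  have "(v, vertex E) \<in> tree_arcs"
    using arc_vertex_iff[OF hv EB] E(2) vertex_h[OF v] by simp
  moreover have "vertex E \<noteq> c"
    using E(1) D(2) y(2) h_vertex[OF EB] by blast
  ultimately show ?thesis by blast
qed

lemma card_chain_pos: "0 < card C"
  using finite_chain top_in_chain card_gt_0_iff by blast

lemma tree_rank_le_iff:
  "u \<in> V \<Longrightarrow> i < card C \<Longrightarrow> tree_rank u \<le> real i \<longleftrightarrow> (\<exists>D\<in>nth_partition i. h u \<subseteq> D)"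
  unfolding tree_rank_def using block_rank_le_iff[OF h_in_blocks] by simp

lemma tree_rank_label: "x \<in> X \<Longrightarrow> tree_rank (tree_label x) = 0"
proof -
  assume x: "x \<in> X"
  obtain D where D: "D \<in> nth_partition 0" "x \<in> D"
    using partition_onD1[OF partition_on_nth_partition[OF card_chain_pos]] x by blast
  then have "D \<in> blocks" using nth_partition_block[OF card_chain_pos] by blast
  with D x have "h (tree_label x) \<subseteq> D" using least_block_subset h_tree_label by simp
  with D(1) have "tree_rank (tree_label x) \<le> 0"
    using tree_rank_le_iff[OF tree_label_in_V[OF x] card_chain_pos] by auto
  then show ?thesis unfolding tree_rank_def by simp
qed

lemma tree_rank_arc_less: "(u, v) \<in> tree_arcs \<Longrightarrow> tree_rank v < tree_rank u"
  unfolding tree_rank_def tree_arcs_iff covers_def using block_rank_strict_mono h_in_blocks by simp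

lemma tree_rank_nonneg: "tree_rank v \<ge> 0"
  unfolding tree_rank_def by simp

lemma tree_rank_image: "tree_rank ` V = real ` {..<card C}"
  using block_rank_image[OF nonempty] bij_h unfolding tree_rank_def bij_betw_def
  by (metis image_comp image_image)

lemma ts_size_tree_rank: "ts_size V tree_rank = card C - 1"
  unfolding ts_size_def tree_rank_image by (simp add: card_image inj_on_def)

lemma tree_rank_image_ts_size: "tree_rank ` V = real ` {0..ts_size V tree_rank}"
  using tree_rank_image ts_size_tree_rank card_chain_pos
  by (simp add: atLeast0AtMost lessThan_Suc_atMost[symmetric])

lemma ranked_tree_realisation: "ranked_tree X V tree_arcs tree_label tree_rank"
  by (rule ranked_treeI[OF finite_V tree_arcs_in_V acyclic_tree_arcs unique_parents_tree_arcs
      tree_root_in_V tree_root_no_parent tree_root_reaches tree_label_in_V childless_is_tree_label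
      tree_arcs_branching tree_rank_nonneg tree_rank_label tree_rank_arc_less
      tree_rank_image_ts_size])

sublocale T: ranked_X_tree X V tree_arcs tree_label tree_rank
  by (unfold_locales) (rule ranked_tree_realisation)

lemma cluster_realisation:
  assumes u: "u \<in> V" shows "T.cluster u = h u"
proof -
  have "(u, tree_label x) \<in> tree_arcs\<^sup>* \<longleftrightarrow> x \<in> h u" if x: "x \<in> X" for x
  proof -
    have "(u, tree_label x) \<in> tree_arcs\<^sup>* \<longleftrightarrow> least_block x \<subseteq> h u"
      using rtrancl_tree_arcs_iff[OF u tree_label_in_V[OF x]] h_tree_label[OF x] by simp
    also have "\<dots> \<longleftrightarrow> x \<in> h u"
      using least_block_subset[OF x h_in_blocks[OF u]] mem_least_block[OF x] by blast
    finally show ?thesis .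
  qed
  then show ?thesis unfolding T.cluster_def using block_subset[OF h_in_blocks[OF u]] by blast
qed

lemma level_realisation_in_partition:
  assumes i: "i < card C" and u: "u \<in> T.level i"
  shows "h u \<in> nth_partition i"
proof -
  have uV: "u \<in> V" using u T.level_subset_V by blast
  then obtain D where D: "D \<in> nth_partition i" "h u \<subseteq> D"
    using tree_rank_le_iff[OF _ i] u unfolding T.level_iff by blast
  have DB: "D \<in> blocks" using nth_partition_block[OF i D(1)] .
  have "h u = D"
  proof (rule ccontr)
    assume "h u \<noteq> D"
    with D(2) obtain E where E: "E \<subseteq> D" "covers E (h u)"
      using ex_cover_below[OF h_in_blocks[OF uV] DB] by blast
    then have EB: "E \<in> blocks" unfolding covers_def by simp
    have "(vertex E, u) \<in> tree_arcs"
      using arc_vertex_iff[OF EB h_in_blocks[OF uV]] E(2) vertex_h[OF uV] by simp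
    then have "tree_rank (vertex E) > real i" using u unfolding T.level_iff by blast
    moreover have "tree_rank (vertex E) \<le> real i"
      using tree_rank_le_iff[OF vertex_in_V[OF EB] i] h_vertex[OF EB] D(1) E(1) by auto
    ultimately show False by simp
  qed
  with D(1) show ?thesis by simp
qed

text \<open>A parent of a block of the \<open>i\<close>-th partition properly contains it, so no block of that
  partition contains the parent.\<close>

lemma vertex_in_level_realisation:
  assumes i: "i < card C" and B: "B \<in> nth_partition i"
  shows "vertex B \<in> T.level i"
proof -
  have BB: "B \<in> blocks" using nth_partition_block[OF i B] .
  have "tree_rank p > real i" if p: "(p, vertex B) \<in> tree_arcs" for p
  proof -
    have pV: "p \<in> V" and cov: "covers (h p) B"
      using p h_vertex[OF BB] unfolding tree_arcs_iff by auto
    have "\<not> h p \<subseteq> D" if "D \<in> nth_partition i" for D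
    proof
      assume "h p \<subseteq> D"
      with cov have "B \<subset> D" unfolding covers_def by blast
      then show False
        using partition_block_subset_eq[OF partition_on_nth_partition[OF i] B that]
        by blast
    qed
    then show ?thesis using tree_rank_le_iff[OF pV i] by auto
  qed
  moreover have "tree_rank (vertex B) \<le> real i"
    using tree_rank_le_iff[OF vertex_in_V[OF BB] i] h_vertex[OF BB] B by auto
  ultimately show ?thesis unfolding T.level_iff using vertex_in_V[OF BB] by simp
qed

lemma level_clusters_realisation: "i < card C \<Longrightarrow> T.cluster ` T.level i = nth_partition i"
proof -
  assume i: "i < card C"
  have "T.cluster ` T.level i = h ` T.level i"
    using cluster_realisation T.level_subset_V by (auto intro: image_cong)
  also have "\<dots> = nth_partition i"
  proof
    show "h ` T.level i \<subseteq> nth_partition i" using level_realisation_in_partition[OF i] by blast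
    have "B \<in> h ` T.level i" if "B \<in> nth_partition i" for B
      using vertex_in_level_realisation[OF i that] h_vertex nth_partition_block[OF i that] by force
    then show "nth_partition i \<subseteq> h ` T.level i" by blast
  qed
  finally show ?thesis .
qed

lemma level_chain_realisation: "T.level_chain = C"
proof -
  have "{..T.\<sigma>} = {..<card C}"
    unfolding T.\<sigma>_def ts_size_tree_rank using card_chain_pos by auto
  then have "T.level_chain = (\<lambda>i. T.cluster ` T.level i) ` {..<card C}"
    unfolding T.level_chain_def by blast
  also have "\<dots> = nth_partition ` {..<card C}"
    using level_clusters_realisation by (intro image_cong) simp_all
  also have "\<dots> = C"
    using bij_betw_inv_into[OF bij_betw_chain_height]
    unfolding nth_partition_def bij_betw_def by simp
  finally show ?thesis .
qed

end

lemma (in partition_chain) ex_ranked_tree_with_chain: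
  assumes "X \<noteq> {}" and "infinite (UNIV :: 'v set)"
  shows "\<exists>T \<in> (ranked_trees X :: ('v set \<times> ('v \<times> 'v) set \<times> ('x \<Rightarrow> 'v) \<times> ('v \<Rightarrow> real)) set).
    partition_chain_of X T = C"
proof -
  obtain V :: "'v set" where V: "finite V" "card V = card blocks"
    using infinite_arbitrarily_large[OF assms(2)] by blast
  then obtain h where "bij_betw h V blocks"
    using finite_same_card_bij[OF _ finite_blocks] by blast
  with assms(1) interpret R: chain_realisation X C V h by unfold_locales
  have "partition_chain_of X (V, R.tree_arcs, R.tree_label, R.tree_rank) = C"
    using R.T.partition_chain_of_eq R.level_chain_realisation by simp
  moreover have "(V, R.tree_arcs, R.tree_label, R.tree_rank) \<in> ranked_trees X"
    unfolding ranked_trees_def using R.ranked_tree_realisation by simp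
  ultimately show ?thesis by blast
qed

lemma ranked_treesE:
  assumes "T \<in> ranked_trees X"
  obtains V A \<phi> r where "T = (V, A, \<phi>, r)" and "ranked_X_tree X V A \<phi> r"
  using assms unfolding ranked_trees_def ranked_X_tree_def by auto

lemma partition_chain_of_in_chains_with_top:
  "T \<in> ranked_trees X \<Longrightarrow> partition_chain_of X T \<in> chains_with_top X"
  by (erule ranked_treesE)
    (simp add: ranked_X_tree.partition_chain_of_eq ranked_X_tree.level_chain_in_chains_with_top)

lemma partition_chain_of_eq_iff_ranked_iso:
  assumes "finite X" and "T1 \<in> ranked_trees X" and "T2 \<in> ranked_trees X"
  shows "partition_chain_of X T1 = partition_chain_of X T2 \<longleftrightarrow> ranked_iso X T1 T2"
proof -
  from assms(2,3) obtain V1 A1 \<phi>1 r1 V2 A2 \<phi>2 r2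
    where T: "T1 = (V1, A1, \<phi>1, r1)" "T2 = (V2, A2, \<phi>2, r2)"
      and trees: "ranked_X_tree X V1 A1 \<phi>1 r1" "ranked_X_tree X V2 A2 \<phi>2 r2"
    by (metis ranked_treesE)
  show ?thesis
    unfolding T ranked_X_tree.partition_chain_of_eq[OF trees(1)]
      ranked_X_tree.partition_chain_of_eq[OF trees(2)]
    using level_chain_eq_if_ranked_iso[OF trees] ranked_iso_if_level_chain_eq[OF \<open>finite X\<close> trees]
    by blast
qed

theorem mainTheorem3:
  fixes X :: "'x set"
  assumes "finite X" and "X \<noteq> {}"
    and "infinite (UNIV :: 'v set)"
  shows "(\<forall>T \<in> (ranked_trees X :: ('v set \<times> ('v \<times> 'v) set \<times> ('x \<Rightarrow> 'v) \<times> ('v \<Rightarrow> real)) set).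
            partition_chain_of X T \<in> chains_with_top X)
       \<and> (\<forall>T1 \<in> (ranked_trees X :: ('v set \<times> ('v \<times> 'v) set \<times> ('x \<Rightarrow> 'v) \<times> ('v \<Rightarrow> real)) set).
            \<forall>T2 \<in> ranked_trees X.
            partition_chain_of X T1 = partition_chain_of X T2 \<longleftrightarrow> ranked_iso X T1 T2)
       \<and> (\<forall>C \<in> chains_with_top X.
            \<exists>T \<in> (ranked_trees X :: ('v set \<times> ('v \<times> 'v) set \<times> ('x \<Rightarrow> 'v) \<times> ('v \<Rightarrow> real)) set).
            partition_chain_of X T = C)"
proof (intro conjI ballI)
  show "partition_chain_of X T \<in> chains_with_top X" if "T \<in> ranked_trees X" for T
    using that by (rule partition_chain_of_in_chains_with_top)
  show "partition_chain_of X T1 = partition_chain_of X T2 \<longleftrightarrow> ranked_iso X T1 T2"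
    if "T1 \<in> ranked_trees X" "T2 \<in> ranked_trees X" for T1 T2
    using partition_chain_of_eq_iff_ranked_iso[OF \<open>finite X\<close> that] .
next
  fix C assume "C \<in> chains_with_top X"
  then interpret partition_chain X C using \<open>finite X\<close> by unfold_locales
  show "\<exists>T \<in> (ranked_trees X :: ('v set \<times> ('v \<times> 'v) set \<times> ('x \<Rightarrow> 'v) \<times> ('v \<Rightarrow> real)) set).
      partition_chain_of X T = C"
    by (rule ex_ranked_tree_with_chain[OF assms(2,3)])
qed

end
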